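(* Let $\Psi$ satisfy the standing assumption on $\Psi$ below, let $\{H_k\}_{k=1}^\infty=\{(h_{s,k},h_{f,k})\}$ be two-timescale admissible with $\sum_{k=1}^\infty h_{f,k}^{1+\varrho}<\infty$ for some $\varrho\in[1,\infty)$, let $\mathbf X$ be a solution of the stochastic simulator (S) below, and let $\hat\Omega\subset\Omega$ be such that for almost every $\omega\in\hat\Omega$ the hybrid sequence $\mathbf X(\omega)$ is bounded and complete. Then for almost every $\omega\in\hat\Omega$ the pair $(\mathbf X(\omega),\{H_k\}_{k=1}^\infty)$ is a two-timescale asymptotic simulation of $\mathcal H^1_{\mathrm{2HB}}$.
   Context: Standing assumption on $\Psi$: $\Psi:\mathbb R^n\to\mathbb R$ is continuously differentiable, has compact sublevel sets and globally Lipschitz gradient, and, with $\Psi^*:=\min\Psi$, satisfies $\mathcal Q^*:=\{q:\Psi(q)=\Psi^*\}=\{q:\nabla\Psi(q)=0\}$; moreover $\Psi=\frac1N\sum_{i=1}^N\Psi_i$ with $N\in\mathbb Z_{\ge1}$ and each $\Psi_i:\mathbb R^n\to\mathbb R$ continuously differentiable. Hybrid heavy ball data. Fix $\kappa,T>0$. State $\chi=(q,p,\tau)\in\mathbb R^{2n+1}$, $\xi\in\mathbb R^n$. $F_{\mathrm{HB}}(\chi,\xi):=(p,\,-\kappa p-\xi,\,\min\{1,2-\tau/T\})$; $G_{\mathrm{HB}}(\chi):=(q,0,0)$. $C:=\{(\chi,\xi):\langle\xi,p\rangle\le0,\tau\ge T\}\cup\{(\chi,\xi):\tau\le T\}$,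 $D:=\{(\chi,\xi):\langle\xi,p\rangle\ge0,\tau\ge T\}$. The hybrid inclusion $\mathcal H^1_{\mathrm{2HB}}$ on $\mathbb R^{3n+1}$ with slow state $x_s=\chi$ and fast state $x_f=\xi$ is: on $C$, $\dot\chi=F_{\mathrm{HB}}(\chi,\xi)$, $\dot\xi=-\xi+\nabla\Psi(q)$; on $D$, $(\chi^+,\xi^+)=(G_{\mathrm{HB}}(\chi),\xi)$. Stochastic simulator (S). Let $(\Omega,\mathcal F,\mathbb P)$ be a probability space and $\{\mathbf y_k\}_{k\ge1}$ i.i.d. random variables uniform on $\{1,\dots,N\}$; $\{\mathcal F_k\}$ is the minimal filtration generated by them, $\mathcal F_0=\{\emptyset,\Omega\}$. A collection $\omega\mapsto\mathbf X(\omega)=(\mathbf x_s(\omega),\mathbf x_f(\omega))$, with $\mathbf x_s=(\mathbf q,\mathbf p,\boldsymbol\tau)$, is a solution of (S) if for every $\omega$, $\mathbf X(\omega)$ is a complete hybrid sequence in $\mathbb R^{3n+1}$ such that: whenever $(k,j),(k+1,j)\in\mathrm{dom}\,\mathbf X(\omega)$, $\mathbf X(k,j)\in C$, $\mathbf x_s(k+1,j)=\mathbf x_s(k,j)+h_{s,k+1}F_{\mathrm{HB}}(\mathbf x_s(k,j),\mathbf x_f(k,j))$ and $\mathbf x_f(k+1,j)=\mathbf x_f(k,j)+h_{f,k+1}(\nabla\Psi_{\mathbf y_{k+1}}(\mathbf q(k,j))-\mathbf x_f(k,j))$; whenever $(k,j),(k,j+1)\in\mathrm{dom}\,\mathbf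 X(\omega)$, $\mathbf X(k,j)\in D$, $\mathbf x_s(k,j+1)=G_{\mathrm{HB}}(\mathbf x_s(k,j))$, $\mathbf x_f(k,j+1)=\mathbf x_f(k,j)$; and $\mathbf X$ is adapted: for each $k$, $\omega\mapsto\mathrm{gph}(\mathbf X(\omega))\cap(\{k\}\times\mathbb R\times\mathbb R^{3n+1})$ is $\mathcal F_k$-measurable. Hybrid sequences and two-timescale asymptotic simulations. A compact hybrid sequence domain is $\bigcup_{j=0}^{J-1}(\{k_j,\dots,k_{j+1}\}\times\{j\})$ with integers $0=k_0\le\dots\le k_J$; a hybrid sequence domain is a union of a nondecreasing sequence of such sets; a hybrid sequence is a map on one; complete = unbounded domain; complete in the $k$- (resp. $j$-) direction = set of $k$'s (resp. $j$'s) in the domain unbounded. $\bar\jmath_k:=\inf\{j:(k+1,j)\in\mathrm{dom}\}$, $\bar k_j:=\inf\{k:(k,j+1)\in\mathrm{dom}\}$. $\limsup$ of a sequence = its set of accumulation points. For $\mathcal H=(C,F,D,G)$, $F_C(x):=F(x)$ if $x\in C$ else $\emptyset$; $G_D$ analogously. A positive sequence is admissible if it tends to $0$ and is not summable; $\{H_k\}$, $H_k=(h_{s,k},h_{f,k})\in\mathbb R^2_{>0}$, is two-timescale admissible if both component sequences are admissible and $h_{s,k}/h_{f,k}\to0$. For $r\in\{s,f\}$: $\tau_{r,k}:=\sum_{i=0}^{k-1}h_{r,i+1}$, $m_r(t):=\max\{k:\tau_{r,k}\le t\}$, $\mathcal I_{r,n,T}:=\{k:n+1\le k\le m_r(\tau_{r,n}+T)\}$.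 For a hybrid inclusion $(C,F^1,D,G)$ with $F^1=F_s\times F_f$, $(\Phi,\{H_k\})$ is a two-timescale asymptotic simulation if $\Phi=(\phi_s,\phi_f)$ is a bounded complete hybrid sequence, $\{H_k\}$ is two-timescale admissible, and: (1) if $\Phi$ is complete in the $k$-direction, there is a bounded sequence $f_k=(f_{s,k},f_{f,k})$ with $\limsup_k(\Phi(k,\bar\jmath_k),f_k)\subset\mathrm{gph}(F^1_C)$ and, with $\hat f_{r,k+1}:=(\phi_r(k+1,\bar\jmath_k)-\phi_r(k,\bar\jmath_k))/h_{r,k+1}$, for all $T>0$, $r\in\{s,f\}$: $\lim_{n\to\infty}\sup_{k\in\mathcal I_{r,n,T}}|\sum_{i=n}^{k-1}h_{r,i+1}(\hat f_{r,i+1}-f_{r,i})|=0$; (2) if $\Phi$ is complete in the $j$-direction, $\limsup_j(\Phi(\bar k_j,j),\Phi(\bar k_j,j+1))\subset\mathrm{gph}(G_D)$. *)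

theory Defs
  imports "HOL-Analysis.Analysis" "HOL-Probability.Probability"
begin

definition compact_hsd :: "(nat \<times> nat) set \<Rightarrow> bool" where
  "compact_hsd S \<longleftrightarrow> (\<exists>J ks. ks 0 = 0 \<and> (\<forall>j<J. ks j \<le> ks (Suc j)) \<and>
      S = (\<Union>j<J. {ks j..ks (Suc j)} \<times> {j}))"

definition hybrid_seq_domain :: "(nat \<times> nat) set \<Rightarrow> bool" where
  "hybrid_seq_domain E \<longleftrightarrow> (\<exists>Sq. (\<forall>i. compact_hsd (Sq i)) \<and> (\<forall>i. Sq i \<subseteq> Sq (Suc i)) \<and>
      E = (\<Union>i. Sq i))"

text \<open>Complete: the domain is unbounded (in N x N), i.e. some coordinate is unbounded.\<close>
definition hs_complete :: "(nat \<times> nat) set \<Rightarrow> bool" where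
  "hs_complete E \<longleftrightarrow> \<not> bdd_above (fst ` E) \<or> \<not> bdd_above (snd ` E)"

definition jbar :: "(nat \<times> nat) set \<Rightarrow> nat \<Rightarrow> nat" where
  "jbar E k = Inf {j. (Suc k, j) \<in> E}"

definition kbar :: "(nat \<times> nat) set \<Rightarrow> nat \<Rightarrow> nat" where
  "kbar E j = Inf {k. (k, Suc j) \<in> E}"

text \<open>limsup of a sequence = its set of accumulation points.\<close>
definition acc_pts :: "(nat \<Rightarrow> 'b::topological_space) \<Rightarrow> 'b set" where
  "acc_pts x = {l. \<exists>r. strict_mono r \<and> (x \<circ> r) \<longlonglongrightarrow> l}"

text \<open>Sequences are indexed from 1; the value at index 0 is irrelevant.\<close>
definition admissible :: "(nat \<Rightarrow> real) \<Rightarrow> bool" where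
  "admissible h \<longleftrightarrow> (\<forall>k\<ge>1. h k > 0) \<and> h \<longlonglongrightarrow> 0 \<and> \<not> summable (\<lambda>k. h (Suc k))"

definition two_ts_admissible :: "(nat \<Rightarrow> real) \<Rightarrow> (nat \<Rightarrow> real) \<Rightarrow> bool" where
  "two_ts_admissible hs hf \<longleftrightarrow> admissible hs \<and> admissible hf \<and> (\<lambda>k. hs k / hf k) \<longlonglongrightarrow> 0"

definition tts_tau :: "(nat \<Rightarrow> real) \<Rightarrow> nat \<Rightarrow> real" where
  "tts_tau h k = (\<Sum>i<k. h (Suc i))"

definition tts_m :: "(nat \<Rightarrow> real) \<Rightarrow> real \<Rightarrow> nat" where
  "tts_m h t = (GREATEST k. tts_tau h k \<le> t)"

definition tts_I :: "(nat \<Rightarrow> real) \<Rightarrow> nat \<Rightarrow> real \<Rightarrow> nat set" where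
  "tts_I h n T = {k. n + 1 \<le> k \<and> k \<le> tts_m h (tts_tau h n + T)}"

text \<open>Condition: for all T > 0,
  lim_n sup_{k in I_{n,T}} |sum_{i=n}^{k-1} h_{i+1} (fhat_{i+1} - f_i)| = 0,
  with fhat_{i+1} = (phi(i+1, jb i) - phi(i, jb i)) / h_{i+1}
  (limit written out with epsilon; empty sup counts as 0).\<close>
definition tts_interp_cond ::
  "(nat \<Rightarrow> real) \<Rightarrow> (nat \<Rightarrow> nat \<Rightarrow> 'b::real_normed_vector) \<Rightarrow> (nat \<Rightarrow> nat) \<Rightarrow> (nat \<Rightarrow> 'b) \<Rightarrow> bool" where
  "tts_interp_cond h phi jb f \<longleftrightarrow>
     (\<forall>T>0. \<forall>\<epsilon>>0. eventually (\<lambda>n. \<forall>k\<in>tts_I h n T.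
        norm (\<Sum>i\<in>{n..<k}. h (Suc i) *\<^sub>R
           ((1 / h (Suc i)) *\<^sub>R (phi (Suc i) (jb i) - phi i (jb i)) - f i)) < \<epsilon>) sequentially)"

text \<open>Two-timescale asymptotic simulation of the hybrid inclusion (C, F1, D, G), with
  F1 = F_s x F_f given as a set-valued map on slow x fast states.\<close>
definition two_ts_asym_sim ::
  "('xs::real_normed_vector \<times> 'xf::real_normed_vector) set \<Rightarrow> ('xs \<times> 'xf \<Rightarrow> ('xs \<times> 'xf) set)
   \<Rightarrow> ('xs \<times> 'xf) set \<Rightarrow> ('xs \<times> 'xf \<Rightarrow> ('xs \<times> 'xf) set)
   \<Rightarrow> (nat \<times> nat) set \<Rightarrow> (nat \<Rightarrow> nat \<Rightarrow> 'xs \<times> 'xf) \<Rightarrow> (nat \<Rightarrow> real) \<Rightarrow> (nat \<Rightarrow> real) \<Rightarrow> bool" where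
  "two_ts_asym_sim C F1 D G E \<Phi> hs hf \<longleftrightarrow>
     hybrid_seq_domain E \<and> hs_complete E \<and> bounded ((\<lambda>(k, j). \<Phi> k j) ` E) \<and>
     two_ts_admissible hs hf \<and>
     (\<not> bdd_above (fst ` E) \<longrightarrow>
        (\<exists>f :: nat \<Rightarrow> 'xs \<times> 'xf. bounded (range f) \<and>
           acc_pts (\<lambda>k. (\<Phi> k (jbar E k), f k)) \<subseteq> {(x, v). x \<in> C \<and> v \<in> F1 x} \<and>
           tts_interp_cond hs (\<lambda>k j. fst (\<Phi> k j)) (jbar E) (\<lambda>k. fst (f k)) \<and>
           tts_interp_cond hf (\<lambda>k j. snd (\<Phi> k j)) (jbar E) (\<lambda>k. snd (f k)))) \<and>
     (\<not> bdd_above (snd ` E) \<longrightarrow>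
        acc_pts (\<lambda>j. (\<Phi> (kbar E j) j, \<Phi> (kbar E j) (Suc j))) \<subseteq> {(x, x'). x \<in> D \<and> x' \<in> G x})"

section \<open>Hybrid heavy ball data; states ((q,p,tau), xi)\<close>

definition HB_C :: "real \<Rightarrow> (('a::real_inner \<times> 'a \<times> real) \<times> 'a) set" where
  "HB_C Tc = {((q, p, \<tau>), \<xi>). (\<xi> \<bullet> p \<le> 0 \<and> \<tau> \<ge> Tc) \<or> \<tau> \<le> Tc}"

definition HB_D :: "real \<Rightarrow> (('a::real_inner \<times> 'a \<times> real) \<times> 'a) set" where
  "HB_D Tc = {((q, p, \<tau>), \<xi>). \<xi> \<bullet> p \<ge> 0 \<and> \<tau> \<ge> Tc}"

definition F_HB :: "real \<Rightarrow> real \<Rightarrow> ('a::real_normed_vector \<times> 'a \<times> real) \<Rightarrow> 'a \<Rightarrow> 'a \<times> 'a \<times> real" where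
  "F_HB \<kappa> Tc xs \<xi> = (case xs of (q, p, \<tau>) \<Rightarrow> (p, - (\<kappa> *\<^sub>R p) - \<xi>, min 1 (2 - \<tau> / Tc)))"

definition G_HB :: "('a::real_normed_vector \<times> 'a \<times> real) \<Rightarrow> 'a \<times> 'a \<times> real" where
  "G_HB xs = (case xs of (q, p, \<tau>) \<Rightarrow> (q, 0, 0))"

definition HB_F1 :: "real \<Rightarrow> real \<Rightarrow> ('a \<Rightarrow> 'a) \<Rightarrow> ('a::real_normed_vector \<times> 'a \<times> real) \<times> 'a
     \<Rightarrow> (('a \<times> 'a \<times> real) \<times> 'a) set" where
  "HB_F1 \<kappa> Tc g x = (case x of (xs, \<xi>) \<Rightarrow> {(F_HB \<kappa> Tc xs \<xi>, - \<xi> + g (fst xs))})"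

definition HB_G :: "('a::real_normed_vector \<times> 'a \<times> real) \<times> 'a \<Rightarrow> (('a \<times> 'a \<times> real) \<times> 'a) set" where
  "HB_G x = (case x of (xs, \<xi>) \<Rightarrow> {(G_HB xs, \<xi>)})"

definition gen_filt :: "'w measure \<Rightarrow> (nat \<Rightarrow> 'w \<Rightarrow> nat) \<Rightarrow> nat \<Rightarrow> 'w measure" where
  "gen_filt M y k = sigma (space M) {y i -` A \<inter> space M | i A. i \<in> {1..k}}"

text \<open>Measurability of a set-valued map (Effros/Rockafellar-Wets sense).\<close>
definition setval_measurable :: "'w measure \<Rightarrow> ('w \<Rightarrow> 'b::topological_space set) \<Rightarrow> bool" where
  "setval_measurable Fm S \<longleftrightarrow> (\<forall>U. open U \<longrightarrow> {\<omega> \<in> space Fm. S \<omega> \<inter> U \<noteq> {}} \<in> sets Fm)"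

definition S_solution ::
  "'w measure \<Rightarrow> (nat \<Rightarrow> 'w \<Rightarrow> nat) \<Rightarrow> (nat \<Rightarrow> 'a \<Rightarrow> 'a) \<Rightarrow> real \<Rightarrow> real
   \<Rightarrow> (nat \<Rightarrow> real) \<Rightarrow> (nat \<Rightarrow> real)
   \<Rightarrow> ('w \<Rightarrow> (nat \<times> nat) set) \<Rightarrow> ('w \<Rightarrow> nat \<Rightarrow> nat \<Rightarrow> ('a::real_inner \<times> 'a \<times> real) \<times> 'a) \<Rightarrow> bool" where
  "S_solution M y gi \<kappa> Tc hs hf E X \<longleftrightarrow>
     (\<forall>\<omega>\<in>space M. hybrid_seq_domain (E \<omega>) \<and> hs_complete (E \<omega>) \<and>
        (\<forall>k j. (k, j) \<in> E \<omega> \<and> (Suc k, j) \<in> E \<omega> \<longrightarrow>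
           X \<omega> k j \<in> HB_C Tc \<and>
           fst (X \<omega> (Suc k) j) = fst (X \<omega> k j) + hs (Suc k) *\<^sub>R F_HB \<kappa> Tc (fst (X \<omega> k j)) (snd (X \<omega> k j)) \<and>
           snd (X \<omega> (Suc k) j) = snd (X \<omega> k j) +
              hf (Suc k) *\<^sub>R (gi (y (Suc k) \<omega>) (fst (fst (X \<omega> k j))) - snd (X \<omega> k j))) \<and>
        (\<forall>k j. (k, j) \<in> E \<omega> \<and> (k, Suc j) \<in> E \<omega> \<longrightarrow>
           X \<omega> k j \<in> HB_D Tc \<and>
           fst (X \<omega> k (Suc j)) = G_HB (fst (X \<omega> k j)) \<and>
           snd (X \<omega> k (Suc j)) = snd (X \<omega> k j))) \<and>
     (\<forall>k. setval_measurable (gen_filt M y k) (\<lambda>\<omega>. {(k, j, X \<omega> k j) | j. (k, j) \<in> E \<omega>}))"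

end

theory Submission
  imports Defs
begin

text \<open>Along each sample path the slow update is an exact Euler step of F_HB and every jump is
  an exact step of G_HB, so the jump condition and the slow half of the flow condition hold with
  f given by the flow map at the flow points. The fast increment differs from its mean field
  -xi + grad Psi(q) by hf_k sum_m eps_k(m) grad Psi_m(q_k), where eps_k(m) = [y_k = m] - 1/N are
  independent, centred and bounded. Hoeffding's inequality, weakened to a polynomial tail, and
  Borel--Cantelli with sum hf^(1+rho) < infinity make the sums of hf_k eps_k(m) over the blocks
  of any grid in fast time vanish almost surely; this yields the Kushner--Clark condition on all
  windows of bounded fast time. Since q moves only by o(1) in bounded fast time (hs/hf -> 0),
  the continuous weights grad Psi_m(q_k) are essentially frozen on such windows, and the weighted
  noise vanishes too.\<close>

definition hsd_segments :: "nat \<Rightarrow> (nat \<Rightarrow> nat) \<Rightarrow> (nat \<times> nat) set" where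
  "hsd_segments J ks = (\<Union>j<J. {ks j..ks (Suc j)} \<times> {j})"

lemma mem_hsd_segments [simp]:
  "(k, j) \<in> hsd_segments J ks \<longleftrightarrow> j < J \<and> ks j \<le> k \<and> k \<le> ks (Suc j)"
  by (auto simp: hsd_segments_def)

lemma hybrid_seq_domain_common_segments:
  assumes "hybrid_seq_domain E" "a \<in> E" "b \<in> E"
  obtains J ks where "ks 0 = 0" "\<And>j. j < J \<Longrightarrow> ks j \<le> ks (Suc j)"
    "a \<in> hsd_segments J ks" "b \<in> hsd_segments J ks" "hsd_segments J ks \<subseteq> E"
proof -
  obtain Sq where cs: "\<And>i. compact_hsd (Sq i)" and mono: "\<And>i. Sq i \<subseteq> Sq (Suc i)"
    and E: "E = (\<Union>i. Sq i)"
    using assms(1) unfolding hybrid_seq_domain_def by blast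
  obtain i1 i2 where "a \<in> Sq i1" "b \<in> Sq i2" using assms(2,3) E by blast
  then have "a \<in> Sq (max i1 i2)" "b \<in> Sq (max i1 i2)"
    using lift_Suc_mono_le[of Sq, OF mono] by (meson max.cobounded1 max.cobounded2 subsetD)+
  moreover obtain J ks where "ks 0 = 0" "\<forall>j<J. ks j \<le> ks (Suc j)"
      "Sq (max i1 i2) = hsd_segments J ks"
    using cs[of "max i1 i2"] unfolding compact_hsd_def hsd_segments_def by blast
  moreover have "Sq (max i1 i2) \<subseteq> E" using E by blast
  ultimately show ?thesis by (intro that[of ks J]) auto
qed

lemma lift_Suc_mono_le_bounded:
  assumes "\<And>j. j < J \<Longrightarrow> ks j \<le> ks (Suc j)" "i \<le> j" "j \<le> J"
  shows "ks i \<le> (ks j :: nat)"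
  by (rule lift_Suc_mono_le_ivl[of "{..<J}"]) (use assms in auto)

lemma jbar_mem:
  assumes E: "hybrid_seq_domain E" and "(Suc k, j) \<in> E"
  shows "(k, jbar E k) \<in> E" "(Suc k, jbar E k) \<in> E"
proof -
  define j0 where "j0 = jbar E k"
  have j0_Least: "j0 = (LEAST j. (Suc k, j) \<in> E)" unfolding j0_def jbar_def Inf_nat_def by simp
  have in0: "(Suc k, j0) \<in> E" unfolding j0_Least by (rule LeastI) fact
  obtain J ks where ks0: "ks 0 = 0" and mono: "\<And>j. j < J \<Longrightarrow> ks j \<le> ks (Suc j)"
    and seg: "(Suc k, j0) \<in> hsd_segments J ks" and sub: "hsd_segments J ks \<subseteq> E"
    using hybrid_seq_domain_common_segments[OF E in0 in0] by metis
  have "ks j0 \<le> k"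
  proof (rule ccontr)
    assume "\<not> ks j0 \<le> k"
    then have start: "ks j0 = Suc k" using seg by simp
    then obtain j1 where j1: "j0 = Suc j1" using ks0 by (cases j0) auto
    then have "(Suc k, j1) \<in> E" using sub seg start mono[of j1] by auto
    then have "j0 \<le> j1" unfolding j0_Least by (rule Least_le)
    then show False using j1 by simp
  qed
  then have "(k, j0) \<in> E" using sub seg by auto
  then show "(k, jbar E k) \<in> E" "(Suc k, jbar E k) \<in> E" using in0 by (simp_all add: j0_def)
qed

lemma kbar_mem:
  assumes E: "hybrid_seq_domain E" and "(k, Suc j) \<in> E"
  shows "(kbar E j, j) \<in> E" "(kbar E j, Suc j) \<in> E"
proof -
  define k0 where "k0 = kbar E j"
  have k0_Least: "k0 = (LEAST k. (k, Suc j) \<in> E)" unfolding k0_def kbar_def Inf_nat_def by simp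
  have in0: "(k0, Suc j) \<in> E" unfolding k0_Least by (rule LeastI) fact
  obtain J ks where mono: "\<And>j. j < J \<Longrightarrow> ks j \<le> ks (Suc j)"
    and seg: "(k0, Suc j) \<in> hsd_segments J ks" and sub: "hsd_segments J ks \<subseteq> E"
    using hybrid_seq_domain_common_segments[OF E in0 in0] by metis
  have "(ks (Suc j), Suc j) \<in> E" using sub seg mono by auto
  then have "k0 \<le> ks (Suc j)" unfolding k0_Least by (rule Least_le)
  then have "(k0, j) \<in> E" using sub seg mono[of j] by auto
  then show "(kbar E j, j) \<in> E" "(kbar E j, Suc j) \<in> E" using in0 by (simp_all add: k0_def)
qed

lemma hybrid_seq_domain_j_mono:
  assumes E: "hybrid_seq_domain E" and "(k, j) \<in> E" "(k', j') \<in> E" "k < k'"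
  shows "j \<le> j'"
proof (rule ccontr)
  assume "\<not> j \<le> j'"
  obtain J ks where mono: "\<And>j. j < J \<Longrightarrow> ks j \<le> ks (Suc j)"
    and seg: "(k, j) \<in> hsd_segments J ks" "(k', j') \<in> hsd_segments J ks"
    using hybrid_seq_domain_common_segments[OF E assms(2,3)] by metis
  have "ks (Suc j') \<le> ks j"
    using lift_Suc_mono_le_bounded[of J ks, OF mono] \<open>\<not> j \<le> j'\<close> seg(1) by simp
  then show False using seg \<open>k < k'\<close> by auto
qed

lemma hybrid_seq_domain_j_interval:
  assumes E: "hybrid_seq_domain E" and "(k, j1) \<in> E" "(k, j2) \<in> E" "j1 \<le> j" "j \<le> j2"
  shows "(k, j) \<in> E"
proof -
  obtain J ks where mono: "\<And>j. j < J \<Longrightarrow> ks j \<le> ks (Suc j)"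
    and seg: "(k, j1) \<in> hsd_segments J ks" "(k, j2) \<in> hsd_segments J ks"
    and sub: "hsd_segments J ks \<subseteq> E"
    using hybrid_seq_domain_common_segments[OF E assms(2,3)] by metis
  have "ks j \<le> ks j2" "ks (Suc j1) \<le> ks (Suc j)"
    using lift_Suc_mono_le_bounded[of J ks, OF mono] seg assms(4,5) by auto
  then show ?thesis using seg sub assms(5) by auto
qed

lemma hybrid_seq_domain_jbar_mem:
  assumes E: "hybrid_seq_domain E" and unb: "\<not> bdd_above (fst ` E)"
  shows "(k, jbar E k) \<in> E" "(Suc k, jbar E k) \<in> E"
proof -
  obtain x where x: "x \<in> E" "Suc k < fst x"
    using unb by (force simp: bdd_above_def not_le)
  have "\<exists>j. (Suc k, j) \<in> E"
    using less_imp_le[OF x(2)]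
  proof (induction rule: inc_induct)
    case base then show ?case using x(1) by (metis prod.collapse)
  next
    case (step n) then show ?case using jbar_mem[OF E] by blast
  qed
  then show "(k, jbar E k) \<in> E" "(Suc k, jbar E k) \<in> E" using jbar_mem[OF E] by blast+
qed

lemma hybrid_seq_domain_kbar_mem:
  assumes E: "hybrid_seq_domain E" and unb: "\<not> bdd_above (snd ` E)"
  shows "(kbar E j, j) \<in> E" "(kbar E j, Suc j) \<in> E"
proof -
  obtain x where x: "x \<in> E" "Suc j < snd x"
    using unb by (force simp: bdd_above_def not_le)
  have "\<exists>k. (k, Suc j) \<in> E"
    using less_imp_le[OF x(2)]
  proof (induction rule: inc_induct)
    case base then show ?case using x(1) by (metis prod.collapse)
  next
    case (step n) then show ?case using kbar_mem[OF E] by blast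
  qed
  then show "(kbar E j, j) \<in> E" "(kbar E j, Suc j) \<in> E" using kbar_mem[OF E] by blast+
qed

lemma admissible_pos: "admissible h \<Longrightarrow> 0 < h (Suc k)"
  by (simp add: admissible_def)

lemma tts_tau_0 [simp]: "tts_tau h 0 = 0"
  by (simp add: tts_tau_def)

lemma tts_tau_Suc: "tts_tau h (Suc k) = tts_tau h k + h (Suc k)"
  by (simp add: tts_tau_def)

lemma tts_tau_diff: "n \<le> k \<Longrightarrow> tts_tau h k - tts_tau h n = (\<Sum>i\<in>{n..<k}. h (Suc i))"
  unfolding tts_tau_def by (metis atLeast0LessThan sum_diff_nat_ivl zero_le)

lemma tts_tau_mono:
  assumes "\<And>i. 0 \<le> h (Suc i)" and "n \<le> k"
  shows "tts_tau h n \<le> tts_tau h k"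
  using tts_tau_diff[OF assms(2), of h] sum_nonneg[of "{n..<k}" "\<lambda>i. h (Suc i)"] assms(1) by simp

lemma tts_tau_nonneg: "(\<And>i. 0 \<le> h (Suc i)) \<Longrightarrow> 0 \<le> tts_tau h k"
  using tts_tau_mono[of h 0 k] by simp

lemma tts_tau_unbounded:
  assumes "admissible h"
  shows "\<exists>k. t < tts_tau h k"
proof (rule ccontr)
  assume "\<not> (\<exists>k. t < tts_tau h k)"
  then have "summable (\<lambda>k. h (Suc k))"
    using assms by (intro summableI_nonneg_bounded[where x=t])
      (auto simp: tts_tau_def not_less admissible_pos less_imp_le)
  then show False using assms by (simp add: admissible_def)
qed

lemma tts_I_window:
  assumes h: "admissible h" and "0 \<le> T" and k: "k \<in> tts_I h n T"
  shows "n < k" "tts_tau h k \<le> tts_tau h n + T"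
proof -
  define t where "t = tts_tau h n + T"
  have mono: "tts_tau h i \<le> tts_tau h i'" if "i \<le> i'" for i i'
    using tts_tau_mono[OF _ that] admissible_pos[OF h] less_imp_le by blast
  obtain b where b: "t < tts_tau h b" using tts_tau_unbounded[OF h] by blast
  have "tts_tau h (GREATEST i. tts_tau h i \<le> t) \<le> t"
  proof (rule GreatestI_nat)
    show "tts_tau h n \<le> t" using \<open>0 \<le> T\<close> by (simp add: t_def)
    show "i \<le> b" if "tts_tau h i \<le> t" for i
      using that b mono[of b i] by linarith
  qed
  moreover have "k \<le> (GREATEST i. tts_tau h i \<le> t)"
    using k by (simp add: tts_I_def tts_m_def t_def)
  ultimately show "tts_tau h k \<le> tts_tau h n + T" using mono t_def by (meson order_trans)
  show "n < k" using k by (simp add: tts_I_def)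
qed

definition tau_hit :: "(nat \<Rightarrow> real) \<Rightarrow> real \<Rightarrow> nat" where
  "tau_hit h t = (LEAST k. t \<le> tts_tau h k)"

lemma tau_hit_le: "t \<le> tts_tau h n \<Longrightarrow> tau_hit h t \<le> n"
  unfolding tau_hit_def by (rule Least_le)

lemma le_tts_tau_tau_hit:
  assumes "admissible h"
  shows "t \<le> tts_tau h (tau_hit h t)"
proof -
  obtain k where "t \<le> tts_tau h k" using tts_tau_unbounded[OF assms] less_imp_le by blast
  then show ?thesis unfolding tau_hit_def by (rule LeastI)
qed

lemma tau_hit_mono:
  assumes "admissible h" "s \<le> t"
  shows "tau_hit h s \<le> tau_hit h t"
  using le_tts_tau_tau_hit[OF assms(1), of t] assms(2) by (intro tau_hit_le) simp

lemma tts_tau_tau_hit_le: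
  assumes "\<And>k. h k \<le> Hm" "0 \<le> Hm" "0 \<le> t"
  shows "tts_tau h (tau_hit h t) \<le> t + Hm"
proof (cases "tau_hit h t")
  case (Suc k)
  then have "tts_tau h k < t" using tau_hit_le[of t h k] by linarith
  then show ?thesis using Suc assms(1)[of "Suc k"] by (simp add: tts_tau_Suc)
qed (use assms in simp)

lemma norm_sum_le_tts_tau_diff:
  fixes v :: "nat \<Rightarrow> 'b::real_normed_vector"
  assumes "\<And>i. norm (v i) \<le> B * h (Suc i)" "x \<le> y"
  shows "norm (\<Sum>i\<in>{x..<y}. v i) \<le> B * (tts_tau h y - tts_tau h x)"
proof -
  have "norm (\<Sum>i\<in>{x..<y}. v i) \<le> (\<Sum>i\<in>{x..<y}. B * h (Suc i))"
    by (rule order_trans[OF norm_sum sum_mono]) (rule assms(1))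
  then show ?thesis by (simp add: tts_tau_diff[OF assms(2)] sum_distrib_left)
qed

text \<open>The Kushner--Clark condition, with windows measured in the time scale of h.\<close>
definition vanishing_window_sums :: "(nat \<Rightarrow> real) \<Rightarrow> (nat \<Rightarrow> 'b::real_normed_vector) \<Rightarrow> bool" where
  "vanishing_window_sums h v \<longleftrightarrow> (\<forall>T>0. \<forall>e>0. eventually (\<lambda>n. \<forall>k\<ge>n.
     tts_tau h k \<le> tts_tau h n + T \<longrightarrow> norm (\<Sum>i\<in>{n..<k}. v i) < e) sequentially)"

lemma vanishing_window_sums_add:
  assumes "vanishing_window_sums h v" "vanishing_window_sums h w"
  shows "vanishing_window_sums h (\<lambda>i. v i + w i)"
  unfolding vanishing_window_sums_def
proof (intro allI impI)
  fix T e :: real assume "T > 0" "e > 0"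
  then have "e/2 > 0" by simp
  then have "eventually (\<lambda>n. \<forall>k\<ge>n. tts_tau h k \<le> tts_tau h n + T \<longrightarrow>
      norm (\<Sum>i\<in>{n..<k}. v i) < e/2) sequentially"
    "eventually (\<lambda>n. \<forall>k\<ge>n. tts_tau h k \<le> tts_tau h n + T \<longrightarrow>
      norm (\<Sum>i\<in>{n..<k}. w i) < e/2) sequentially"
    using assms[unfolded vanishing_window_sums_def, rule_format, OF \<open>T > 0\<close>] by blast+
  then show "eventually (\<lambda>n. \<forall>k\<ge>n. tts_tau h k \<le> tts_tau h n + T \<longrightarrow>
      norm (\<Sum>i\<in>{n..<k}. v i + w i) < e) sequentially"
  proof eventually_elim
    case (elim n)
    show ?case
    proof (intro allI impI)
      fix k assume "n \<le> k" "tts_tau h k \<le> tts_tau h n + T"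
      then have "norm (\<Sum>i\<in>{n..<k}. v i) < e/2" "norm (\<Sum>i\<in>{n..<k}. w i) < e/2"
        using elim by auto
      then have "norm (\<Sum>i\<in>{n..<k}. v i) + norm (\<Sum>i\<in>{n..<k}. w i) < e" by linarith
      then show "norm (\<Sum>i\<in>{n..<k}. v i + w i) < e"
        using norm_triangle_ineq[of "\<Sum>i\<in>{n..<k}. v i" "\<Sum>i\<in>{n..<k}. w i"]
        by (simp add: sum.distrib)
    qed
  qed
qed

lemma vanishing_window_sums_sum:
  assumes "finite A" "\<And>m. m \<in> A \<Longrightarrow> vanishing_window_sums h (v m)"
  shows "vanishing_window_sums h (\<lambda>i. \<Sum>m\<in>A. v m i)"
  using assms
proof (induction A rule: finite_induct)
  case empty then show ?case by (simp add: vanishing_window_sums_def)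
next
  case (insert m A)
  then show ?case by (simp add: vanishing_window_sums_add)
qed

lemma tts_interp_condI:
  fixes phi :: "nat \<Rightarrow> nat \<Rightarrow> 'b::real_normed_vector"
  assumes h: "admissible h"
    and vanish: "vanishing_window_sums h
      (\<lambda>i. h (Suc i) *\<^sub>R ((1 / h (Suc i)) *\<^sub>R (phi (Suc i) (jb i) - phi i (jb i)) - f i))"
  shows "tts_interp_cond h phi jb f"
  unfolding tts_interp_cond_def
proof (intro allI impI)
  fix T e :: real assume "T > 0" "e > 0"
  with vanish have "eventually (\<lambda>n. \<forall>k\<ge>n. tts_tau h k \<le> tts_tau h n + T \<longrightarrow> norm (\<Sum>i\<in>{n..<k}.
      h (Suc i) *\<^sub>R ((1 / h (Suc i)) *\<^sub>R (phi (Suc i) (jb i) - phi i (jb i)) - f i)) < e) sequentially"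
    unfolding vanishing_window_sums_def by blast
  then show "eventually (\<lambda>n. \<forall>k\<in>tts_I h n T. norm (\<Sum>i\<in>{n..<k}.
      h (Suc i) *\<^sub>R ((1 / h (Suc i)) *\<^sub>R (phi (Suc i) (jb i) - phi i (jb i)) - f i)) < e) sequentially"
  proof (rule eventually_mono, intro ballI)
    fix n k assume "\<forall>k\<ge>n. tts_tau h k \<le> tts_tau h n + T \<longrightarrow> norm (\<Sum>i\<in>{n..<k}.
      h (Suc i) *\<^sub>R ((1 / h (Suc i)) *\<^sub>R (phi (Suc i) (jb i) - phi i (jb i)) - f i)) < e"
      and "k \<in> tts_I h n T"
    then show "norm (\<Sum>i\<in>{n..<k}.
      h (Suc i) *\<^sub>R ((1 / h (Suc i)) *\<^sub>R (phi (Suc i) (jb i) - phi i (jb i)) - f i)) < e"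
      using tts_I_window[OF h less_imp_le[OF \<open>T > 0\<close>]] by (simp add: less_imp_le)
  qed
qed

lemma norm_sum_ivl_le_detour:
  fixes v :: "nat \<Rightarrow> 'b::real_normed_vector"
  assumes "m \<le> n" "m \<le> m'" "m' \<le> k" "n \<le> k"
  shows "norm (\<Sum>i\<in>{n..<k}. v i)
    \<le> norm (\<Sum>i\<in>{m..<m'}. v i) + norm (\<Sum>i\<in>{m'..<k}. v i) + norm (\<Sum>i\<in>{m..<n}. v i)"
proof -
  have "(\<Sum>i\<in>{m..<n}. v i) + (\<Sum>i\<in>{n..<k}. v i) = (\<Sum>i\<in>{m..<k}. v i)"
    "(\<Sum>i\<in>{m..<m'}. v i) + (\<Sum>i\<in>{m'..<k}. v i) = (\<Sum>i\<in>{m..<k}. v i)"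
    using assms by (simp_all add: sum.atLeastLessThan_concat)
  then have "(\<Sum>i\<in>{n..<k}. v i) = (\<Sum>i\<in>{m..<m'}. v i) + (\<Sum>i\<in>{m'..<k}. v i) - (\<Sum>i\<in>{m..<n}. v i)"
    by (metis add_diff_cancel_left')
  then show ?thesis by (metis norm_triangle_ineq norm_triangle_ineq4 add_right_mono order_trans)
qed

lemma tts_tau_floor_window:
  assumes h: "admissible h" and "c > 0" and "n \<le> k" and window: "tts_tau h k \<le> tts_tau h n + T"
  shows "nat \<lfloor>tts_tau h n * c\<rfloor> \<le> nat \<lfloor>tts_tau h k * c\<rfloor>"
    and "nat \<lfloor>tts_tau h k * c\<rfloor> - nat \<lfloor>tts_tau h n * c\<rfloor> \<le> nat \<lceil>T * c\<rceil>"
proof -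
  have "tts_tau h n \<le> tts_tau h k"
    using tts_tau_mono[OF _ \<open>n \<le> k\<close>] admissible_pos[OF h] less_imp_le by blast
  then show "nat \<lfloor>tts_tau h n * c\<rfloor> \<le> nat \<lfloor>tts_tau h k * c\<rfloor>"
    using \<open>c > 0\<close> by (intro nat_mono floor_mono) simp
  have "tts_tau h k * c \<le> tts_tau h n * c + T * c"
    using window \<open>c > 0\<close> by (simp add: distrib_right[symmetric])
  moreover have "T * c \<le> real (nat \<lceil>T * c\<rceil>)" by (rule real_nat_ceiling_ge)
  moreover have "0 \<le> tts_tau h i * c" for i
    using tts_tau_nonneg[of h i] admissible_pos[OF h] \<open>c > 0\<close> by (simp add: less_imp_le)
  then have "real (nat \<lfloor>tts_tau h k * c\<rfloor>) \<le> tts_tau h k * c"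
    "tts_tau h n * c < real (nat \<lfloor>tts_tau h n * c\<rfloor>) + 1"
    by (simp_all add: of_nat_floor)
  ultimately have "real (nat \<lfloor>tts_tau h k * c\<rfloor>) < real (nat \<lfloor>tts_tau h n * c\<rfloor> + 1 + nat \<lceil>T * c\<rceil>)"
    by simp
  then have "nat \<lfloor>tts_tau h k * c\<rfloor> < nat \<lfloor>tts_tau h n * c\<rfloor> + 1 + nat \<lceil>T * c\<rceil>"
    by (simp only: of_nat_less_iff)
  then show "nat \<lfloor>tts_tau h k * c\<rfloor> - nat \<lfloor>tts_tau h n * c\<rfloor> \<le> nat \<lceil>T * c\<rceil>" by linarith
qed

lemma tts_tau_tau_hit_floor:
  fixes n :: nat
  assumes h: "admissible h" and "c > 0"
  defines "a \<equiv> nat \<lfloor>tts_tau h n * c\<rfloor>"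
  shows "tau_hit h (real a / c) \<le> n" and "tts_tau h n - tts_tau h (tau_hit h (real a / c)) \<le> 1 / c"
proof -
  have "0 \<le> tts_tau h n * c"
    using tts_tau_nonneg[of h n] admissible_pos[OF h] \<open>c > 0\<close> by (simp add: less_imp_le)
  then have a: "real a \<le> tts_tau h n * c" "tts_tau h n * c < real a + 1"
    unfolding a_def by (simp_all add: of_nat_floor)
  then show "tau_hit h (real a / c) \<le> n"
    using \<open>c > 0\<close> by (intro tau_hit_le) (simp add: field_simps)
  have "real a / c \<le> tts_tau h (tau_hit h (real a / c))" by (rule le_tts_tau_tau_hit[OF h])
  then show "tts_tau h n - tts_tau h (tau_hit h (real a / c)) \<le> 1 / c"
    using a(2) \<open>c > 0\<close> by (simp add: field_simps)
qed

lemma norm_sum_from_floor_grid_le: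
  fixes v :: "nat \<Rightarrow> 'b::real_normed_vector" and n :: nat
  assumes h: "admissible h" and "c > 0" "0 \<le> B" and bound: "\<And>i. norm (v i) \<le> B * h (Suc i)"
  shows "norm (\<Sum>i\<in>{tau_hit h (real (nat \<lfloor>tts_tau h n * c\<rfloor>) / c)..<n}. v i) \<le> B / c"
proof -
  have "norm (\<Sum>i\<in>{tau_hit h (real (nat \<lfloor>tts_tau h n * c\<rfloor>) / c)..<n}. v i)
      \<le> B * (tts_tau h n - tts_tau h (tau_hit h (real (nat \<lfloor>tts_tau h n * c\<rfloor>) / c)))"
    by (rule norm_sum_le_tts_tau_diff[of v B h, OF bound tts_tau_tau_hit_floor(1)[OF h \<open>c > 0\<close>]])
  also have "\<dots> \<le> B * (1 / c)"
    using tts_tau_tau_hit_floor(2)[OF h \<open>c > 0\<close>, of n] \<open>0 \<le> B\<close> by (intro mult_left_mono) auto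
  finally show ?thesis by simp
qed

text \<open>Kushner--Clark from block sums: a window of fast time T contains at most about T c
  consecutive blocks of the grid of mesh 1/c, and the two incomplete end blocks contribute at
  most B/c each.\<close>
lemma vanishing_window_sums_of_grid_blocks:
  fixes v :: "nat \<Rightarrow> 'b::real_normed_vector"
  assumes h: "admissible h" and "0 \<le> B" and bound: "\<And>i. norm (v i) \<le> B * h (Suc i)"
    and blocks: "\<And>l d. ((\<lambda>a. \<Sum>i\<in>{tau_hit h (real a / (real l + 1))..<tau_hit h (real (a + d) / (real l + 1))}.
       v i) \<longlonglongrightarrow> 0)"
  shows "vanishing_window_sums h v"
  unfolding vanishing_window_sums_def
proof (intro allI impI)
  fix T e :: real assume "T > 0" "e > 0"
  obtain l :: nat where "4 * B / e < real l" using reals_Archimedean2 by blast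
  define c where "c = real l + 1"
  have "c > 0" by (simp add: c_def)
  have "4 * B < e * real l" using \<open>4 * B / e < real l\<close> \<open>e > 0\<close> by (simp add: field_simps)
  then have Bc: "B / c < e / 4" using \<open>e > 0\<close> \<open>0 \<le> B\<close> by (simp add: c_def field_simps)
  define g where "g a = tau_hit h (real a / c)" for a
  define fl where "fl n = nat \<lfloor>tts_tau h n * c\<rfloor>" for n
  have small_blocks: "eventually (\<lambda>a. norm (\<Sum>i\<in>{g a..<g (a + d)}. v i) < r) sequentially"
    if "r > 0" for d r
    using blocks[of l d] that unfolding tendsto_iff g_def c_def by (simp add: dist_norm)
  have "eventually (\<lambda>a. \<forall>d\<in>{..nat \<lceil>T * c\<rceil>}. norm (\<Sum>i\<in>{g a..<g (a + d)}. v i) < e / 2) sequentially"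
    by (intro eventually_ball_finite ballI small_blocks) (use \<open>e > 0\<close> in simp_all)
  then obtain A0 where A0: "\<And>a d. A0 \<le> a \<Longrightarrow> d \<le> nat \<lceil>T * c\<rceil> \<Longrightarrow> norm (\<Sum>i\<in>{g a..<g (a + d)}. v i) < e / 2"
    unfolding eventually_sequentially by auto
  obtain K where "real A0 / c + 1 \<le> tts_tau h K" using tts_tau_unbounded[OF h] less_imp_le by blast
  have tail: "g (fl n) \<le> n \<and> norm (\<Sum>i\<in>{g (fl n)..<n}. v i) < e / 4" for n
    using tts_tau_tau_hit_floor(1)[OF h \<open>c > 0\<close>, of n] Bc
      norm_sum_from_floor_grid_le[OF h \<open>c > 0\<close> \<open>0 \<le> B\<close> bound, of n]
    unfolding g_def fl_def by linarith
  show "eventually (\<lambda>n. \<forall>k\<ge>n. tts_tau h k \<le> tts_tau h n + T \<longrightarrow> norm (\<Sum>i\<in>{n..<k}. v i) < e) sequentially"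
  proof (rule eventually_sequentiallyI[of K], intro allI impI)
    fix n k assume "K \<le> n" "n \<le> k" and window: "tts_tau h k \<le> tts_tau h n + T"
    have "A0 \<le> fl n"
    proof -
      have "tts_tau h K \<le> tts_tau h n"
        using tts_tau_mono[OF _ \<open>K \<le> n\<close>] admissible_pos[OF h] less_imp_le by blast
      then have "tts_tau h K * c \<le> tts_tau h n * c" using \<open>c > 0\<close> by simp
      moreover have "real A0 + c \<le> tts_tau h K * c"
        using \<open>real A0 / c + 1 \<le> tts_tau h K\<close> \<open>c > 0\<close> by (simp add: field_simps)
      ultimately have "real A0 + c \<le> tts_tau h n * c" by linarith
      then show ?thesis unfolding fl_def using \<open>c > 0\<close> by linarith
    qed
    note floors = tts_tau_floor_window[OF h \<open>c > 0\<close> \<open>n \<le> k\<close> window, folded fl_def]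
    have "norm (\<Sum>i\<in>{g (fl n)..<g (fl k)}. v i) < e / 2"
      using A0[OF \<open>A0 \<le> fl n\<close> floors(2)] floors(1) by simp
    moreover have "g (fl n) \<le> g (fl k)"
      unfolding g_def using floors(1) \<open>c > 0\<close> by (intro tau_hit_mono[OF h] divide_right_mono) auto
    ultimately show "norm (\<Sum>i\<in>{n..<k}. v i) < e"
      using norm_sum_ivl_le_detour[of "g (fl n)" n "g (fl k)" k v] tail[of n] tail[of k] \<open>n \<le> k\<close>
      by linarith
  qed
qed

lemma exp_neg_le_powr:
  fixes x p :: real
  assumes "x > 0" "p > 0"
  shows "exp (- x) \<le> (p / x) powr p"
proof -
  have "x / p \<le> exp (x / p)" using exp_ge_add_one_self[of "x / p"] by linarith
  then have "(x / p) powr p \<le> exp (x / p) powr p"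
    using assms by (intro powr_mono2) auto
  also have "\<dots> = exp x" using assms by (simp add: powr_def)
  finally have "inverse (exp x) \<le> inverse ((x / p) powr p)"
    using assms by (intro le_imp_inverse_le) auto
  then show ?thesis using assms by (simp add: exp_minus powr_divide)
qed

lemma sum_squares_powr_le:
  fixes w :: "'i \<Rightarrow> real"
  assumes "finite I" "\<And>i. i \<in> I \<Longrightarrow> 0 \<le> w i" "p > 0"
  shows "(\<Sum>i\<in>I. (w i)\<^sup>2) powr p \<le> (\<Sum>i\<in>I. w i powr p) * (\<Sum>i\<in>I. w i) powr p"
proof -
  define Q where "Q = (\<Sum>i\<in>I. w i powr p) powr (1 / p)"
  have wQ: "w i \<le> Q" if "i \<in> I" for i
  proof -
    have "w i = (w i powr p) powr (1 / p)" using assms(2)[OF that] \<open>p > 0\<close> by (simp add: powr_powr)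
    also have "\<dots> \<le> Q"
      unfolding Q_def using \<open>p > 0\<close> by (intro powr_mono2 member_le_sum that assms(1)) auto
    finally show ?thesis .
  qed
  have "(\<Sum>i\<in>I. (w i)\<^sup>2) \<le> (\<Sum>i\<in>I. Q * w i)"
    by (intro sum_mono) (simp add: power2_eq_square mult_right_mono wQ assms(2))
  then have "(\<Sum>i\<in>I. (w i)\<^sup>2) powr p \<le> (Q * (\<Sum>i\<in>I. w i)) powr p"
    using \<open>p > 0\<close> by (intro powr_mono2) (auto simp: sum_distrib_left intro: sum_nonneg)
  also have "\<dots> = Q powr p * (\<Sum>i\<in>I. w i) powr p"
    by (simp add: Q_def powr_mult sum_nonneg assms(2))
  also have "Q powr p = (\<Sum>i\<in>I. w i powr p)"
    unfolding Q_def using \<open>p > 0\<close> by (simp add: powr_powr sum_nonneg)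
  finally show ?thesis .
qed

text \<open>A polynomial instead of an exponential tail: it is summable along blocks as soon as the
  p-th powers of the widths are.\<close>
lemma (in prob_space) Hoeffding_powr_tail:
  assumes "finite I" "indep_vars (\<lambda>_. borel) Z I"
    and "\<And>i. i \<in> I \<Longrightarrow> AE x in M. Z i x \<in> {lo i..hi i}" "\<And>i. i \<in> I \<Longrightarrow> lo i < hi i"
    and "\<And>i. i \<in> I \<Longrightarrow> expectation (Z i) = 0" and "e > 0" "p > 0"
  shows "prob {x \<in> space M. e \<le> \<bar>\<Sum>i\<in>I. Z i x\<bar>}
    \<le> 2 * (p / (2 * e\<^sup>2)) powr p * (\<Sum>i\<in>I. (hi i - lo i) powr p) * (\<Sum>i\<in>I. hi i - lo i) powr p"
proof (cases "I = {}")
  case True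
  then show ?thesis using \<open>e > 0\<close> by simp
next
  case False
  interpret Hoeffding_ineq M I Z lo hi "\<Sum>i\<in>I. expectation (Z i)"
    by unfold_locales (use assms in auto)
  define \<sigma> where "\<sigma> = (\<Sum>i\<in>I. (hi i - lo i)\<^sup>2)"
  have "\<sigma> > 0" unfolding \<sigma>_def using assms(1) False by (intro sum_pos) (auto dest!: assms(4))
  have "prob {x \<in> space M. e \<le> \<bar>\<Sum>i\<in>I. Z i x\<bar>} \<le> 2 * exp (- (2 * e\<^sup>2 / \<sigma>))"
    using Hoeffding_ineq_abs_ge[of e] assms(5,6) \<open>\<sigma> > 0\<close> by (simp add: \<sigma>_def)
  also have "exp (- (2 * e\<^sup>2 / \<sigma>)) \<le> (p / (2 * e\<^sup>2)) powr p * \<sigma> powr p"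
    using exp_neg_le_powr[of "2 * e\<^sup>2 / \<sigma>" p] assms(6,7) \<open>\<sigma> > 0\<close>
    by (simp add: powr_mult[symmetric] field_simps)
  also have "\<sigma> powr p \<le> (\<Sum>i\<in>I. (hi i - lo i) powr p) * (\<Sum>i\<in>I. hi i - lo i) powr p"
    unfolding \<sigma>_def using assms(1,4,7) by (intro sum_squares_powr_le) (auto simp: less_imp_le)
  finally show ?thesis by (simp add: mult_left_mono mult.assoc)
qed

text \<open>Each index lies in at most d of the blocks.\<close>
lemma summable_block_sums:
  fixes f :: "nat \<Rightarrow> real"
  assumes "\<And>k. 0 \<le> f k" "summable f" "mono g"
  shows "summable (\<lambda>a. \<Sum>k\<in>{g a..<g (a + d)}. f k)"
proof -
  define F where "F x = (\<Sum>k<x. f k)" for x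
  have F_diff: "F y - F x = (\<Sum>k\<in>{x..<y}. f k)" if "x \<le> y" for x y
    unfolding F_def by (metis atLeast0LessThan sum_diff_nat_ivl zero_le that)
  define \<delta> where "\<delta> b = F (g (Suc b)) - F (g b)" for b
  have \<delta>_nonneg: "0 \<le> \<delta> b" for b
    unfolding \<delta>_def using F_diff[of "g b" "g (Suc b)"] \<open>mono g\<close> assms(1)
    by (simp add: monoD sum_nonneg)
  have "summable \<delta>"
  proof (rule summableI_nonneg_bounded[OF \<delta>_nonneg])
    fix n
    have "sum \<delta> {..<n} = F (g n) - F (g 0)" unfolding \<delta>_def by (rule sum_lessThan_telescope)
    also have "\<dots> \<le> suminf f"
      using sum_le_suminf[OF assms(2), of "{..<g n}"] assms(1) sum_nonneg[of "{..<g 0}" f]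
      by (simp add: F_def)
    finally show "sum \<delta> {..<n} \<le> suminf f" .
  qed
  have "(\<Sum>k\<in>{g a..<g (a + d)}. f k) = (\<Sum>j<d. \<delta> (a + j))" for a
  proof -
    have "(\<Sum>k\<in>{g a..<g (a + d)}. f k) = F (g (a + d)) - F (g a)"
      using F_diff \<open>mono g\<close> by (simp add: monoD)
    also have "\<dots> = (\<Sum>j<d. \<delta> (a + j))"
      using sum_lessThan_telescope[of "\<lambda>j. F (g (a + j))" d] by (simp add: \<delta>_def)
    finally show ?thesis .
  qed
  moreover have "summable (\<lambda>a. \<delta> (a + j))" for j
    using summable_iff_shift[of \<delta> j] \<open>summable \<delta>\<close> by simp
  ultimately show ?thesis by (simp add: summable_sum)
qed

lemma (in prob_space) Hoeffding_powr_tail_weighted: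
  fixes \<xi> :: "nat \<Rightarrow> 'a \<Rightarrow> real"
  assumes "finite I" "indep_vars (\<lambda>_. borel) \<xi> I"
    and range: "\<And>k x. k \<in> I \<Longrightarrow> \<xi> k x \<in> {lo..hi}" and "lo < hi"
    and "\<And>k. k \<in> I \<Longrightarrow> expectation (\<xi> k) = 0" and w: "\<And>k. k \<in> I \<Longrightarrow> 0 < w k"
    and "e > 0" "p > 0"
  shows "prob {x \<in> space M. e \<le> \<bar>\<Sum>k\<in>I. w k * \<xi> k x\<bar>}
    \<le> 2 * (p / (2 * e\<^sup>2)) powr p * (hi - lo) powr p * (\<Sum>k\<in>I. w k powr p) * ((hi - lo) * (\<Sum>k\<in>I. w k)) powr p"
proof -
  have "prob {x \<in> space M. e \<le> \<bar>\<Sum>k\<in>I. w k * \<xi> k x\<bar>}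
      \<le> 2 * (p / (2 * e\<^sup>2)) powr p * (\<Sum>k\<in>I. (w k * hi - w k * lo) powr p) * (\<Sum>k\<in>I. w k * hi - w k * lo) powr p"
  proof (rule Hoeffding_powr_tail)
    show "indep_vars (\<lambda>_. borel) (\<lambda>k x. w k * \<xi> k x) I"
      using indep_vars_compose2[OF assms(2), where Y="\<lambda>k t. w k * t" and N="\<lambda>_. borel"] by simp
    show "AE x in M. w k * \<xi> k x \<in> {w k * lo..w k * hi}" if "k \<in> I" for k
      using range[OF that] w[OF that] by (auto intro: mult_left_mono)
  qed (use assms in auto)
  moreover have "(\<Sum>k\<in>I. (w k * hi - w k * lo) powr p) = (hi - lo) powr p * (\<Sum>k\<in>I. w k powr p)"
  proof -
    have "(w k * hi - w k * lo) powr p = (hi - lo) powr p * w k powr p" if "k \<in> I" for k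
      using w[OF that] \<open>lo < hi\<close> by (subst powr_mult[symmetric]) (auto simp: algebra_simps)
    then show ?thesis by (simp add: sum_distrib_left)
  qed
  moreover have "(\<Sum>k\<in>I. w k * hi - w k * lo) = (hi - lo) * (\<Sum>k\<in>I. w k)"
    by (simp add: sum_distrib_left algebra_simps)
  ultimately show ?thesis by (simp add: mult.assoc)
qed

lemma (in prob_space) AE_eventually_block_sums_small:
  fixes \<xi> :: "nat \<Rightarrow> 'a \<Rightarrow> real"
  assumes indep: "indep_vars (\<lambda>_. borel) \<xi> {1..}"
    and mean: "\<And>k. k \<ge> 1 \<Longrightarrow> expectation (\<xi> k) = 0"
    and range: "\<And>k x. \<xi> k x \<in> {lo..hi}" and "lo < hi"
    and pos: "\<And>k. 0 < h (Suc k)" and "p > 0" and "summable (\<lambda>k. h (Suc k) powr p)"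
    and "mono g" and width: "\<And>n. (\<Sum>k\<in>{g n..<g (n + d)}. h (Suc k)) \<le> W"
    and "e > 0"
  shows "AE x in M. eventually (\<lambda>n. \<bar>\<Sum>k\<in>{g n..<g (n + d)}. h (Suc k) * \<xi> (Suc k) x\<bar> < e) sequentially"
proof -
  define I where "I n = {Suc (g n)..<Suc (g (n + d))}" for n
  define A where "A n = {x \<in> space M. e \<le> \<bar>\<Sum>k\<in>I n. h k * \<xi> k x\<bar>}" for n
  have I_pos: "I n \<subseteq> {1..}" for n by (auto simp: I_def)
  have shift: "(\<Sum>k\<in>I n. f k) = (\<Sum>k\<in>{g n..<g (n + d)}. f (Suc k))" for f :: "nat \<Rightarrow> real" and n
    unfolding I_def by (rule sum.shift_bounds_Suc_ivl)
  have [measurable]: "\<xi> k \<in> borel_measurable M" if "k \<ge> 1" for k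
    using indep that unfolding indep_vars_def by auto
  have A_sets: "A n \<in> sets M" for n
    unfolding A_def by measurable (auto simp: I_def)
  define C where "C = 2 * (p / (2 * e\<^sup>2)) powr p * (hi - lo) powr p * ((hi - lo) * W) powr p"
  have prob_A: "prob (A n) \<le> C * (\<Sum>k\<in>{g n..<g (n + d)}. h (Suc k) powr p)" for n
  proof -
    have hk: "0 < h k" if "k \<in> I n" for k using pos[of "k - 1"] that by (auto simp: I_def)
    define K where "K = 2 * (p / (2 * e\<^sup>2)) powr p * (hi - lo) powr p * (\<Sum>k\<in>I n. h k powr p)"
    have hoeffding: "prob (A n) \<le> K * ((hi - lo) * (\<Sum>k\<in>I n. h k)) powr p"
      unfolding A_def K_def
      by (rule Hoeffding_powr_tail_weighted[OF _ indep_vars_subset[OF indep I_pos] _ \<open>lo < hi\<close> _ hk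
            \<open>e > 0\<close> \<open>p > 0\<close>]) (use mean I_pos range in \<open>auto simp: I_def\<close>)
    have "((hi - lo) * (\<Sum>k\<in>I n. h k)) powr p \<le> ((hi - lo) * W) powr p"
    proof (rule powr_mono2)
      have "0 \<le> (\<Sum>k\<in>I n. h k)" using hk by (intro sum_nonneg) (simp add: less_imp_le)
      then show "0 \<le> (hi - lo) * (\<Sum>k\<in>I n. h k)" using \<open>lo < hi\<close> by simp
      show "(hi - lo) * (\<Sum>k\<in>I n. h k) \<le> (hi - lo) * W"
        using width[of n] \<open>lo < hi\<close> by (simp add: shift)
    qed (use \<open>p > 0\<close> in simp)
    then have "K * ((hi - lo) * (\<Sum>k\<in>I n. h k)) powr p \<le> K * ((hi - lo) * W) powr p"
      by (rule mult_left_mono) (simp add: K_def sum_nonneg)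
    with hoeffding have "prob (A n) \<le> K * ((hi - lo) * W) powr p" by linarith
    then show ?thesis by (simp add: C_def K_def shift mult_ac)
  qed
  have "summable (\<lambda>n. C * (\<Sum>k\<in>{g n..<g (n + d)}. h (Suc k) powr p))"
    using summable_block_sums[of "\<lambda>k. h (Suc k) powr p" g d] assms by (intro summable_mult) auto
  then have "summable (\<lambda>n. prob (A n))"
    by (rule summable_comparison_test'[where N=0]) (simp add: prob_A)
  then have "AE x in M. eventually (\<lambda>n. x \<in> space M - A n) sequentially"
    by (intro borel_cantelli_AE1 A_sets) (simp_all add: less_top[symmetric])
  then show ?thesis
    by (rule AE_mp[OF _ AE_I2]) (auto elim!: eventually_mono simp: A_def shift not_le)
qed

lemma mono_tau_hit_grid:
  assumes "admissible h" "c > 0"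
  shows "mono (\<lambda>n. tau_hit h (real n / c))"
  using assms by (intro monoI tau_hit_mono divide_right_mono) auto

lemma tau_hit_grid_blocks_bounded:
  assumes h: "admissible h" and "c > 0"
  obtains W where "\<And>n. (\<Sum>k\<in>{tau_hit h (real n / c)..<tau_hit h (real (n + d) / c)}. h (Suc k)) \<le> W"
proof -
  obtain Hm where "0 < Hm" and Hm: "\<And>k. norm (h k) \<le> Hm"
  proof -
    have "Bseq h" using h unfolding admissible_def by (blast intro: convergent_imp_Bseq convergentI)
    then show ?thesis using that by (auto elim!: BseqE)
  qed
  define g where "g n = tau_hit h (real n / c)" for n
  have "(\<Sum>k\<in>{g n..<g (n + d)}. h (Suc k)) \<le> real d / c + Hm" for n
  proof -
    have "g n \<le> g (n + d)"
      using monoD[OF mono_tau_hit_grid[OF h \<open>c > 0\<close>], of n "n + d"] unfolding g_def by simp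
    then have "(\<Sum>k\<in>{g n..<g (n + d)}. h (Suc k)) = tts_tau h (g (n + d)) - tts_tau h (g n)"
      by (simp add: tts_tau_diff)
    also have "\<dots> \<le> (real (n + d) / c + Hm) - real n / c"
      unfolding g_def using Hm \<open>0 < Hm\<close> \<open>c > 0\<close>
      by (intro diff_mono tts_tau_tau_hit_le le_tts_tau_tau_hit[OF h]) (auto dest: abs_le_D1)
    finally show ?thesis by (simp add: add_divide_distrib)
  qed
  then show ?thesis using that unfolding g_def by blast
qed

lemma LIMSEQ_zero_if_eventually_less_inverse:
  fixes X :: "nat \<Rightarrow> 'b::real_normed_vector"
  assumes "\<And>j. eventually (\<lambda>n. norm (X n) < inverse (real (Suc j))) sequentially"
  shows "X \<longlonglongrightarrow> 0"
  unfolding tendsto_iff dist_norm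
proof (intro allI impI)
  fix r :: real assume "r > 0"
  then obtain j where "inverse (real (Suc j)) < r" using reals_Archimedean by blast
  then show "eventually (\<lambda>n. norm (X n - 0) < r) sequentially"
    using assms[of j] by (auto elim: eventually_mono)
qed

lemma (in prob_space) AE_vanishing_window_sums_noise:
  fixes \<xi> :: "nat \<Rightarrow> 'a \<Rightarrow> real"
  assumes h: "admissible h" and "p > 0" and "summable (\<lambda>k. h (Suc k) powr p)"
    and indep: "indep_vars (\<lambda>_. borel) \<xi> {1..}"
    and mean: "\<And>k. k \<ge> 1 \<Longrightarrow> expectation (\<xi> k) = 0"
    and range: "\<And>k x. \<xi> k x \<in> {lo..hi}" and "lo < hi"
  shows "AE x in M. vanishing_window_sums h (\<lambda>k. h (Suc k) * \<xi> (Suc k) x)"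
proof -
  define g where "g l n = tau_hit h (real n / (real l + 1))" for l n
  have "AE x in M. eventually (\<lambda>n. \<bar>\<Sum>k\<in>{g l n..<g l (n + d)}. h (Suc k) * \<xi> (Suc k) x\<bar>
      < inverse (real (Suc j))) sequentially" for l d j
  proof -
    obtain W where "\<And>n. (\<Sum>k\<in>{g l n..<g l (n + d)}. h (Suc k)) \<le> W"
      using tau_hit_grid_blocks_bounded[OF h, of "real l + 1"] unfolding g_def by auto
    then show ?thesis
      using mono_tau_hit_grid[OF h, of "real l + 1"] unfolding g_def
      by (intro AE_eventually_block_sums_small[OF indep mean range \<open>lo < hi\<close> admissible_pos[OF h]
            \<open>p > 0\<close> \<open>summable _\<close>]) simp_all
  qed
  then have "AE x in M. \<forall>l d j. eventually (\<lambda>n. \<bar>\<Sum>k\<in>{g l n..<g l (n + d)}. h (Suc k) * \<xi> (Suc k) x\<bar>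
      < inverse (real (Suc j))) sequentially"
    by (simp add: AE_all_countable)
  then show ?thesis
  proof (rule AE_mp[OF _ AE_I2], intro impI)
    fix x assume blocks: "\<forall>l d j. eventually (\<lambda>n. \<bar>\<Sum>k\<in>{g l n..<g l (n + d)}. h (Suc k) * \<xi> (Suc k) x\<bar>
      < inverse (real (Suc j))) sequentially"
    show "vanishing_window_sums h (\<lambda>k. h (Suc k) * \<xi> (Suc k) x)"
    proof (rule vanishing_window_sums_of_grid_blocks[OF h])
      show "norm (h (Suc k) * \<xi> (Suc k) x) \<le> max \<bar>lo\<bar> \<bar>hi\<bar> * h (Suc k)" for k
        using range[of "Suc k" x] admissible_pos[OF h, of k]
        by (auto simp: abs_mult mult.commute intro!: mult_left_mono)
      show "(\<lambda>n. \<Sum>k\<in>{tau_hit h (real n / (real l + 1))..<tau_hit h (real (n + d) / (real l + 1))}.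
          h (Suc k) * \<xi> (Suc k) x) \<longlonglongrightarrow> 0" for l d
        using blocks unfolding g_def by (intro LIMSEQ_zero_if_eventually_less_inverse) simp
    qed simp
  qed
qed

lemma eventually_tts_tau_ratio_window:
  assumes hf: "admissible hf" and hs: "\<And>k. 0 \<le> hs (Suc k)"
    and ratio: "(\<lambda>k. hs k / hf k) \<longlonglongrightarrow> 0" and "r > 0"
  shows "eventually (\<lambda>n. \<forall>k\<ge>n. tts_tau hs k - tts_tau hs n \<le> r * (tts_tau hf k - tts_tau hf n)) sequentially"
proof -
  obtain K where K: "\<And>k. K \<le> k \<Longrightarrow> hs k / hf k < r"
    using order_tendstoD(2)[OF ratio \<open>r > 0\<close>] unfolding eventually_sequentially by blast
  show ?thesis
  proof (rule eventually_sequentiallyI[of K], intro allI impI)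
    fix n k assume "K \<le> n" "n \<le> k"
    have "hs (Suc i) \<le> r * hf (Suc i)" if "i \<in> {n..<k}" for i
      using K[of "Suc i"] that \<open>K \<le> n\<close> admissible_pos[OF hf, of i] by (simp add: divide_less_eq)
    then have "(\<Sum>i\<in>{n..<k}. hs (Suc i)) \<le> r * (\<Sum>i\<in>{n..<k}. hf (Suc i))"
      by (auto simp: sum_distrib_left intro!: sum_mono)
    then show "tts_tau hs k - tts_tau hs n \<le> r * (tts_tau hf k - tts_tau hf n)"
      by (simp add: tts_tau_diff[OF \<open>n \<le> k\<close>])
  qed
qed

lemma eventually_slowly_varying_frozen:
  fixes q :: "nat \<Rightarrow> 'a::{real_normed_vector, heine_borel}" and G :: "'a \<Rightarrow> 'b::real_normed_vector"
  assumes hf: "admissible hf" and hs: "\<And>k. 0 \<le> hs (Suc k)"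
    and ratio: "(\<lambda>k. hs k / hf k) \<longlonglongrightarrow> 0"
    and q_bdd: "\<And>i. norm (q i) \<le> R" and q_step: "\<And>i. norm (q (Suc i) - q i) \<le> R * hs (Suc i)"
    and G: "continuous_on UNIV G" and "T > 0" "e > 0"
  shows "eventually (\<lambda>n. \<forall>k\<ge>n. tts_tau hf k \<le> tts_tau hf n + T \<longrightarrow>
    (\<forall>i\<in>{n..<k}. norm (G (q i) - G (q n)) < e)) sequentially"
proof -
  have "0 \<le> R" using norm_ge_zero[of "q 0"] q_bdd[of 0] by linarith
  have q_in: "q i \<in> cball 0 R" for i using q_bdd by simp
  have "uniformly_continuous_on (cball 0 R) G"
    using continuous_on_subset[OF G subset_UNIV] by (intro compact_uniformly_continuous) auto
  then obtain \<delta> where "\<delta> > 0"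
    and uc: "\<And>x x'. x \<in> cball 0 R \<Longrightarrow> x' \<in> cball 0 R \<Longrightarrow> dist x' x < \<delta> \<Longrightarrow> dist (G x') (G x) < e"
    unfolding uniformly_continuous_on_def using \<open>e > 0\<close> by metis
  define r where "r = \<delta> / (R * T + 1)"
  have "0 < R * T + 1" using mult_nonneg_nonneg[OF \<open>0 \<le> R\<close>, of T] \<open>T > 0\<close> by linarith
  then have "r > 0" "R * (r * T) < \<delta>" using \<open>\<delta> > 0\<close> by (simp_all add: r_def field_simps)
  show ?thesis
    using eventually_tts_tau_ratio_window[OF hf hs ratio \<open>r > 0\<close>]
  proof eventually_elim
    case (elim n)
    show ?case
    proof (intro allI impI ballI)
      fix k i assume window: "tts_tau hf k \<le> tts_tau hf n + T" and "i \<in> {n..<k}"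
      have "q i - q n = (\<Sum>l\<in>{n..<i}. q (Suc l) - q l)" using \<open>i \<in> _\<close> by (simp add: sum_Suc_diff')
      then have "norm (q i - q n) \<le> R * (tts_tau hs i - tts_tau hs n)"
        using norm_sum_le_tts_tau_diff[of "\<lambda>l. q (Suc l) - q l" R hs n i] q_step \<open>i \<in> _\<close> by simp
      also have "\<dots> \<le> R * (r * (tts_tau hf i - tts_tau hf n))"
        using elim \<open>i \<in> _\<close> \<open>0 \<le> R\<close> by (auto intro: mult_left_mono)
      also have "\<dots> \<le> R * (r * T)"
        using tts_tau_mono[of hf i k] admissible_pos[OF hf] window \<open>i \<in> _\<close> \<open>0 \<le> R\<close> \<open>r > 0\<close>
        by (auto intro!: mult_left_mono simp: less_imp_le)
      finally show "norm (G (q i) - G (q n)) < e"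
        using uc[OF q_in q_in, of n i] \<open>R * (r * T) < \<delta>\<close> by (simp add: dist_norm norm_minus_commute)
    qed
  qed
qed

lemma norm_sum_scaleR_le_frozen:
  fixes w :: "nat \<Rightarrow> 'b::real_normed_vector"
  assumes "n \<le> k" and c_le: "\<And>i. \<bar>c i\<bar> \<le> h (Suc i)"
    and frozen: "\<And>i. i \<in> {n..<k} \<Longrightarrow> norm (w i - w n) \<le> \<epsilon>"
  shows "norm (\<Sum>i\<in>{n..<k}. c i *\<^sub>R w i)
    \<le> \<bar>\<Sum>i\<in>{n..<k}. c i\<bar> * norm (w n) + (tts_tau h k - tts_tau h n) * \<epsilon>"
proof -
  have "(\<Sum>i\<in>{n..<k}. c i *\<^sub>R w i) = (\<Sum>i\<in>{n..<k}. c i) *\<^sub>R w n + (\<Sum>i\<in>{n..<k}. c i *\<^sub>R (w i - w n))"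
    by (simp add: scaleR_diff_right sum_subtractf scaleR_sum_left)
  moreover have "norm (\<Sum>i\<in>{n..<k}. c i *\<^sub>R (w i - w n)) \<le> (\<Sum>i\<in>{n..<k}. h (Suc i) * \<epsilon>)"
  proof (rule order_trans[OF norm_sum sum_mono])
    fix i assume "i \<in> {n..<k}"
    then show "norm (c i *\<^sub>R (w i - w n)) \<le> h (Suc i) * \<epsilon>"
      unfolding norm_scaleR using c_le[of i] frozen by (intro mult_mono) (auto intro: order_trans)
  qed
  moreover have "(\<Sum>i\<in>{n..<k}. h (Suc i) * \<epsilon>) = (tts_tau h k - tts_tau h n) * \<epsilon>"
    by (simp add: tts_tau_diff[OF \<open>n \<le> k\<close>] sum_distrib_right)
  ultimately show ?thesis
    using norm_triangle_ineq[of "(\<Sum>i\<in>{n..<k}. c i) *\<^sub>R w n" "\<Sum>i\<in>{n..<k}. c i *\<^sub>R (w i - w n)"]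
    by simp
qed

text \<open>The fast noise still averages out against weights depending on the slow state: over a window
  of fast time T the slow state moves by o(1), so the weights are frozen up to a
  uniform-continuity error.\<close>
lemma vanishing_window_sums_scaleR_slowly_varying:
  fixes q :: "nat \<Rightarrow> 'a::{real_normed_vector, heine_borel}" and G :: "'a \<Rightarrow> 'b::real_normed_vector"
  assumes hf: "admissible hf" and hs: "\<And>k. 0 \<le> hs (Suc k)"
    and ratio: "(\<lambda>k. hs k / hf k) \<longlonglongrightarrow> 0"
    and q_bdd: "\<And>i. norm (q i) \<le> R" and q_step: "\<And>i. norm (q (Suc i) - q i) \<le> R * hs (Suc i)"
    and G: "continuous_on UNIV G"
    and c: "vanishing_window_sums hf c" and c_le: "\<And>i. \<bar>c i\<bar> \<le> hf (Suc i)"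
  shows "vanishing_window_sums hf (\<lambda>i. c i *\<^sub>R G (q i))"
  unfolding vanishing_window_sums_def
proof (intro allI impI)
  fix T e :: real assume "T > 0" "e > 0"
  have "bounded (G ` cball 0 R)"
    using continuous_on_subset[OF G subset_UNIV] by (intro compact_imp_bounded compact_continuous_image) auto
  then obtain B where "B > 0" and B: "\<forall>y\<in>G ` cball 0 R. norm y \<le> B"
    unfolding bounded_pos by blast
  define e2 where "e2 = e / (2 * (T + 1))"
  have "e2 > 0" "T * e2 < e / 2" using \<open>e > 0\<close> \<open>T > 0\<close> by (auto simp: e2_def field_simps)
  have "e / (2 * B) > 0" using \<open>e > 0\<close> \<open>B > 0\<close> by simp
  with c \<open>T > 0\<close> have "eventually (\<lambda>n. \<forall>k\<ge>n. tts_tau hf k \<le> tts_tau hf n + T \<longrightarrow>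
      norm (\<Sum>i\<in>{n..<k}. c i) < e / (2 * B)) sequentially"
    unfolding vanishing_window_sums_def by blast
  with eventually_slowly_varying_frozen[OF hf hs ratio q_bdd q_step G \<open>T > 0\<close> \<open>e2 > 0\<close>]
  show "eventually (\<lambda>n. \<forall>k\<ge>n. tts_tau hf k \<le> tts_tau hf n + T \<longrightarrow>
      norm (\<Sum>i\<in>{n..<k}. c i *\<^sub>R G (q i)) < e) sequentially"
  proof eventually_elim
    case (elim n)
    show ?case
    proof (intro allI impI)
      fix k assume "n \<le> k" and window: "tts_tau hf k \<le> tts_tau hf n + T"
      have "\<forall>i\<in>{n..<k}. norm (G (q i) - G (q n)) < e2" using elim \<open>n \<le> k\<close> window by blast
      then have "norm (\<Sum>i\<in>{n..<k}. c i *\<^sub>R G (q i))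
          \<le> \<bar>\<Sum>i\<in>{n..<k}. c i\<bar> * norm (G (q n)) + (tts_tau hf k - tts_tau hf n) * e2"
        by (intro norm_sum_scaleR_le_frozen[where h=hf and c=c, OF \<open>n \<le> k\<close> c_le]) (blast intro: less_imp_le)
      also have "\<dots> \<le> e / (2 * B) * B + T * e2"
        using elim \<open>n \<le> k\<close> window B q_bdd \<open>e2 > 0\<close>
        by (intro add_mono mult_mono mult_right_mono) (auto simp: less_imp_le)
      also have "\<dots> < e" using \<open>T * e2 < e / 2\<close> \<open>B > 0\<close> by simp
      finally show "norm (\<Sum>i\<in>{n..<k}. c i *\<^sub>R G (q i)) < e" .
    qed
  qed
qed

lemma acc_pts_graph_subset:
  fixes u :: "nat \<Rightarrow> 'x::metric_space" and \<phi> :: "'x \<Rightarrow> 'y::metric_space"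
  assumes "\<And>k. u k \<in> S" "closed S" "continuous_on UNIV \<phi>"
  shows "acc_pts (\<lambda>k. (u k, \<phi> (u k))) \<subseteq> {(x, v). x \<in> S \<and> v = \<phi> x}"
proof (clarify)
  fix x v assume "(x, v) \<in> acc_pts (\<lambda>k. (u k, \<phi> (u k)))"
  then obtain r where lim: "((\<lambda>k. (u k, \<phi> (u k))) \<circ> r) \<longlonglongrightarrow> (x, v)"
    unfolding acc_pts_def by blast
  have ux: "(\<lambda>k. u (r k)) \<longlonglongrightarrow> x" using tendsto_fst[OF lim] by (simp add: o_def)
  have "(\<lambda>k. \<phi> (u (r k))) \<longlonglongrightarrow> v" using tendsto_snd[OF lim] by (simp add: o_def)
  moreover have "(\<lambda>k. \<phi> (u (r k))) \<longlonglongrightarrow> \<phi> x"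
    using continuous_on_tendsto_compose[OF assms(3) ux] by simp
  ultimately show "x \<in> S \<and> v = \<phi> x"
    using closed_sequentially[OF assms(2) _ ux] assms(1) LIMSEQ_unique by blast
qed

lemma HB_C_closed: "closed (HB_C Tc :: (('a::real_inner \<times> 'a \<times> real) \<times> 'a) set)"
proof -
  have "HB_C Tc = {x :: ('a \<times> 'a \<times> real) \<times> 'a. (snd x \<bullet> fst (snd (fst x)) \<le> 0 \<and> Tc \<le> snd (snd (fst x)))
      \<or> snd (snd (fst x)) \<le> Tc}"
    by (auto simp: HB_C_def)
  also have "closed \<dots>"
    by (intro closed_Collect_disj closed_Collect_conj closed_Collect_le continuous_intros)
  finally show ?thesis .
qed

lemma HB_D_closed: "closed (HB_D Tc :: (('a::real_inner \<times> 'a \<times> real) \<times> 'a) set)"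
proof -
  have "HB_D Tc = {x :: ('a \<times> 'a \<times> real) \<times> 'a. 0 \<le> snd x \<bullet> fst (snd (fst x)) \<and> Tc \<le> snd (snd (fst x))}"
    by (auto simp: HB_D_def)
  also have "closed \<dots>"
    by (intro closed_Collect_conj closed_Collect_le continuous_intros)
  finally show ?thesis .
qed

lemma F_HB_alt: "F_HB \<kappa> Tc xs \<xi> = (fst (snd xs), - (\<kappa> *\<^sub>R fst (snd xs)) - \<xi>, min 1 (2 - snd (snd xs) / Tc))"
  by (cases xs) (simp add: F_HB_def)

lemma G_HB_alt: "G_HB xs = (fst xs, 0, 0)"
  by (cases xs) (simp add: G_HB_def)

definition HB_flow_map :: "real \<Rightarrow> real \<Rightarrow> ('a \<Rightarrow> 'a) \<Rightarrow> ('a::real_normed_vector \<times> 'a \<times> real) \<times> 'a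
     \<Rightarrow> ('a \<times> 'a \<times> real) \<times> 'a" where
  "HB_flow_map \<kappa> Tc g x = (F_HB \<kappa> Tc (fst x) (snd x), - snd x + g (fst (fst x)))"

definition HB_jump_map :: "('a::real_normed_vector \<times> 'a \<times> real) \<times> 'a \<Rightarrow> ('a \<times> 'a \<times> real) \<times> 'a" where
  "HB_jump_map x = (G_HB (fst x), snd x)"

lemma HB_F1_eq: "HB_F1 \<kappa> Tc g x = {HB_flow_map \<kappa> Tc g x}"
  by (cases x) (simp add: HB_F1_def HB_flow_map_def)

lemma HB_G_eq: "HB_G x = {HB_jump_map x}"
  by (cases x) (simp add: HB_G_def HB_jump_map_def)

lemma continuous_on_HB_flow_map:
  assumes "continuous_on UNIV g" "Tc > 0"
  shows "continuous_on UNIV (HB_flow_map \<kappa> Tc g)"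
  unfolding HB_flow_map_def F_HB_alt
  by (intro continuous_intros continuous_on_compose2[OF assms(1)]) (use assms(2) in auto)

lemma continuous_on_HB_jump_map: "continuous_on UNIV HB_jump_map"
  unfolding HB_jump_map_def G_HB_alt by (intro continuous_intros)

definition HB_sample_path ::
  "(nat \<Rightarrow> 'a \<Rightarrow> 'a) \<Rightarrow> real \<Rightarrow> real \<Rightarrow> (nat \<Rightarrow> real) \<Rightarrow> (nat \<Rightarrow> real) \<Rightarrow> (nat \<Rightarrow> nat)
   \<Rightarrow> (nat \<times> nat) set \<Rightarrow> (nat \<Rightarrow> nat \<Rightarrow> ('a::real_inner \<times> 'a \<times> real) \<times> 'a) \<Rightarrow> bool" where
  "HB_sample_path gi \<kappa> Tc hs hf yy E X \<longleftrightarrow> hybrid_seq_domain E \<and>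
     (\<forall>k j. (k, j) \<in> E \<and> (Suc k, j) \<in> E \<longrightarrow> X k j \<in> HB_C Tc \<and>
        fst (X (Suc k) j) = fst (X k j) + hs (Suc k) *\<^sub>R F_HB \<kappa> Tc (fst (X k j)) (snd (X k j)) \<and>
        snd (X (Suc k) j) = snd (X k j) + hf (Suc k) *\<^sub>R (gi (yy (Suc k)) (fst (fst (X k j))) - snd (X k j))) \<and>
     (\<forall>k j. (k, j) \<in> E \<and> (k, Suc j) \<in> E \<longrightarrow> X k j \<in> HB_D Tc \<and>
        fst (X k (Suc j)) = G_HB (fst (X k j)) \<and> snd (X k (Suc j)) = snd (X k j))"

lemma S_solution_sample_path:
  "S_solution M y gi \<kappa> Tc hs hf E X \<Longrightarrow> \<omega> \<in> space M \<Longrightarrow>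
    HB_sample_path gi \<kappa> Tc hs hf (\<lambda>k. y k \<omega>) (E \<omega>) (X \<omega>)"
  by (simp add: S_solution_def HB_sample_path_def)

lemma HB_sample_path_jump_condition:
  assumes path: "HB_sample_path gi \<kappa> Tc hs hf yy E X" and unb: "\<not> bdd_above (snd ` E)"
  shows "acc_pts (\<lambda>j. (X (kbar E j) j, X (kbar E j) (Suc j))) \<subseteq> {(x, x'). x \<in> HB_D Tc \<and> x' \<in> HB_G x}"
proof -
  have E: "hybrid_seq_domain E" using path by (simp add: HB_sample_path_def)
  define u where "u j = X (kbar E j) j" for j
  have "u j \<in> HB_D Tc" "X (kbar E j) (Suc j) = HB_jump_map (u j)" for j
    using path hybrid_seq_domain_kbar_mem[OF E unb, of j]
    by (auto simp: HB_sample_path_def HB_jump_map_def u_def prod_eq_iff)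
  moreover have "acc_pts (\<lambda>j. (u j, HB_jump_map (u j))) \<subseteq> {(x, v). x \<in> HB_D Tc \<and> v = HB_jump_map x}"
    by (intro acc_pts_graph_subset HB_D_closed continuous_on_HB_jump_map) fact
  ultimately show ?thesis by (auto simp: u_def HB_G_eq)
qed

lemma HB_sample_path_flow_steps:
  assumes path: "HB_sample_path gi \<kappa> Tc hs hf yy E X" and unb: "\<not> bdd_above (fst ` E)"
  defines "\<Phi> \<equiv> \<lambda>k. X k (jbar E k)"
  shows "\<Phi> k \<in> HB_C Tc"
    and "fst (X (Suc k) (jbar E k)) = fst (\<Phi> k) + hs (Suc k) *\<^sub>R F_HB \<kappa> Tc (fst (\<Phi> k)) (snd (\<Phi> k))"
    and "snd (X (Suc k) (jbar E k)) = snd (\<Phi> k) + hf (Suc k) *\<^sub>R (gi (yy (Suc k)) (fst (fst (\<Phi> k))) - snd (\<Phi> k))"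
    and "fst (fst (\<Phi> (Suc k))) = fst (fst (\<Phi> k)) + hs (Suc k) *\<^sub>R fst (snd (fst (\<Phi> k)))"
proof -
  have E: "hybrid_seq_domain E" using path by (simp add: HB_sample_path_def)
  note dom = hybrid_seq_domain_jbar_mem[OF E unb]
  show flow: "\<Phi> k \<in> HB_C Tc"
    "fst (X (Suc k) (jbar E k)) = fst (\<Phi> k) + hs (Suc k) *\<^sub>R F_HB \<kappa> Tc (fst (\<Phi> k)) (snd (\<Phi> k))"
    "snd (X (Suc k) (jbar E k)) = snd (\<Phi> k) + hf (Suc k) *\<^sub>R (gi (yy (Suc k)) (fst (fst (\<Phi> k))) - snd (\<Phi> k))"
    using path dom[of k] unfolding HB_sample_path_def \<Phi>_def by blast+
  \<comment> \<open>Between the flow steps at k and at k + 1 only jumps occur, and they do not move q.\<close>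
  have mono: "jbar E k \<le> jbar E (Suc k)"
    by (rule hybrid_seq_domain_j_mono[OF E dom(2)[of k] dom(2)[of "Suc k"]]) simp
  have "fst (fst (X (Suc k) j)) = fst (fst (X (Suc k) (jbar E k)))"
    if "jbar E k \<le> j" "j \<le> jbar E (Suc k)" for j
    using that
  proof (induction j rule: dec_induct)
    case (step j)
    then have "(Suc k, j) \<in> E" "(Suc k, Suc j) \<in> E"
      using hybrid_seq_domain_j_interval[OF E dom(2)[of k] dom(1)[of "Suc k"]] by auto
    with step path show ?case by (simp add: HB_sample_path_def G_HB_alt)
  qed simp
  then show "fst (fst (\<Phi> (Suc k))) = fst (fst (\<Phi> k)) + hs (Suc k) *\<^sub>R fst (snd (fst (\<Phi> k)))"
    using flow(2) mono by (simp add: \<Phi>_def F_HB_alt)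
qed

lemma scaleR_sum_centered_indicator:
  fixes v :: "'i \<Rightarrow> 'b::real_vector"
  assumes "finite A" "y \<in> A"
  shows "v y - (1 / real (card A)) *\<^sub>R (\<Sum>m\<in>A. v m)
    = (\<Sum>m\<in>A. ((if y = m then 1 else 0) - 1 / real (card A)) *\<^sub>R v m)"
proof -
  have "((if y = m then 1 else 0) - 1 / real (card A)) *\<^sub>R v m
      = (if y = m then v m else 0) - (1 / real (card A)) *\<^sub>R v m" for m
    by (simp add: scaleR_left_diff_distrib)
  then show ?thesis using assms by (simp add: sum_subtractf scaleR_sum_right)
qed

lemma HB_sample_path_position_bounds:
  assumes path: "HB_sample_path gi \<kappa> Tc hs hf yy E X" and unb: "\<not> bdd_above (fst ` E)"
    and bdd: "bounded ((\<lambda>(k, j). X k j) ` E)" and hs: "\<And>k. 0 \<le> hs (Suc k)"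
  obtains R where "\<And>k. norm (fst (fst (X k (jbar E k)))) \<le> R"
    and "\<And>k. norm (fst (fst (X (Suc k) (jbar E (Suc k)))) - fst (fst (X k (jbar E k)))) \<le> R * hs (Suc k)"
proof -
  have E: "hybrid_seq_domain E" using path by (simp add: HB_sample_path_def)
  obtain R where R: "\<And>k. norm (X k (jbar E k)) \<le> R"
    using bdd hybrid_seq_domain_jbar_mem(1)[OF E unb] unfolding bounded_iff by fastforce
  have fst_le: "norm (fst z) \<le> norm z" for z :: "'u::real_normed_vector \<times> 'v::real_normed_vector"
    using norm_fst_le[of "fst z" "snd z"] by simp
  have snd_le: "norm (snd z) \<le> norm z" for z :: "'u::real_normed_vector \<times> 'v::real_normed_vector"
    using norm_snd_le[of "snd z" "fst z"] by simp
  show ?thesis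
  proof (rule that)
    show "norm (fst (fst (X k (jbar E k)))) \<le> R" for k
      using R[of k] fst_le[of "fst (X k (jbar E k))"] fst_le[of "X k (jbar E k)"] by linarith
    show "norm (fst (fst (X (Suc k) (jbar E (Suc k)))) - fst (fst (X k (jbar E k)))) \<le> R * hs (Suc k)" for k
    proof -
      have p_bdd: "norm (fst (snd (fst (X k (jbar E k))))) \<le> R"
        using R[of k] fst_le[of "snd (fst (X k (jbar E k)))"] snd_le[of "fst (X k (jbar E k))"]
          fst_le[of "X k (jbar E k)"] by linarith
      show ?thesis
        using mult_right_mono[OF p_bdd hs[of k]] HB_sample_path_flow_steps(4)[OF path unb, of k] hs[of k]
        by (simp add: mult.commute)
    qed
  qed
qed

lemma HB_sample_path_slow_interp_cond:
  assumes path: "HB_sample_path gi \<kappa> Tc hs hf yy E X" and unb: "\<not> bdd_above (fst ` E)"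
    and hs: "admissible hs"
  shows "tts_interp_cond hs (\<lambda>k j. fst (X k j)) (jbar E) (\<lambda>k. fst (HB_flow_map \<kappa> Tc g (X k (jbar E k))))"
proof (rule tts_interp_condI[OF hs])
  have zero: "hs (Suc i) *\<^sub>R ((1 / hs (Suc i)) *\<^sub>R (fst (X (Suc i) (jbar E i)) - fst (X i (jbar E i)))
      - fst (HB_flow_map \<kappa> Tc g (X i (jbar E i)))) = 0" for i
    using admissible_pos[OF hs, of i] HB_sample_path_flow_steps(2)[OF path unb, of i]
    by (simp add: HB_flow_map_def)
  show "vanishing_window_sums hs (\<lambda>i. hs (Suc i) *\<^sub>R ((1 / hs (Suc i)) *\<^sub>R
      (fst (X (Suc i) (jbar E i)) - fst (X i (jbar E i))) - fst (HB_flow_map \<kappa> Tc g (X i (jbar E i)))))"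
    unfolding zero by (simp add: vanishing_window_sums_def)
qed

lemma HB_sample_path_fast_interp_cond:
  fixes g :: "'a::euclidean_space \<Rightarrow> 'a" and gi :: "nat \<Rightarrow> 'a \<Rightarrow> 'a"
  assumes path: "HB_sample_path gi \<kappa> Tc hs hf yy E X" and unb: "\<not> bdd_above (fst ` E)"
    and bdd: "bounded ((\<lambda>(k, j). X k j) ` E)" and steps: "two_ts_admissible hs hf"
    and gi: "\<And>m. m \<in> A \<Longrightarrow> continuous_on UNIV (gi m)"
    and "finite A" and g_avg: "\<And>q. g q = (1 / real (card A)) *\<^sub>R (\<Sum>m\<in>A. gi m q)"
    and yy: "\<And>i. yy (Suc i) \<in> A"
    and noise: "\<And>m. m \<in> A \<Longrightarrow> vanishing_window_sums hf
      (\<lambda>i. hf (Suc i) * ((if yy (Suc i) = m then 1 else 0) - 1 / real (card A)))"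
  shows "tts_interp_cond hf (\<lambda>k j. snd (X k j)) (jbar E) (\<lambda>k. snd (HB_flow_map \<kappa> Tc g (X k (jbar E k))))"
proof (rule tts_interp_condI)
  have hs: "admissible hs" and hf: "admissible hf" and ratio: "(\<lambda>k. hs k / hf k) \<longlonglongrightarrow> 0"
    using steps by (auto simp: two_ts_admissible_def)
  then show "admissible hf" by simp
  define q where "q k = fst (fst (X k (jbar E k)))" for k
  define \<epsilon> where "\<epsilon> m i = (if yy (Suc i) = m then 1 else 0) - 1 / real (card A)" for m i
  have fast_term: "hf (Suc i) *\<^sub>R ((1 / hf (Suc i)) *\<^sub>R (snd (X (Suc i) (jbar E i)) - snd (X i (jbar E i)))
      - snd (HB_flow_map \<kappa> Tc g (X i (jbar E i)))) = (\<Sum>m\<in>A. (hf (Suc i) * \<epsilon> m i) *\<^sub>R gi m (q i))" for i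
  proof -
    have "hf (Suc i) *\<^sub>R ((1 / hf (Suc i)) *\<^sub>R (snd (X (Suc i) (jbar E i)) - snd (X i (jbar E i)))
        - snd (HB_flow_map \<kappa> Tc g (X i (jbar E i)))) = hf (Suc i) *\<^sub>R (gi (yy (Suc i)) (q i) - g (q i))"
      using admissible_pos[OF hf, of i] HB_sample_path_flow_steps(3)[OF path unb, of i]
      by (simp add: HB_flow_map_def q_def algebra_simps)
    also have "gi (yy (Suc i)) (q i) - g (q i) = (\<Sum>m\<in>A. \<epsilon> m i *\<^sub>R gi m (q i))"
      unfolding g_avg \<epsilon>_def by (rule scaleR_sum_centered_indicator[OF \<open>finite A\<close> yy])
    finally show ?thesis by (simp add: scaleR_sum_right)
  qed
  have hs_nonneg: "0 \<le> hs (Suc k)" for k using admissible_pos[OF hs] less_imp_le by blast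
  obtain R where q_bdd: "\<And>k. norm (q k) \<le> R" and q_step: "\<And>k. norm (q (Suc k) - q k) \<le> R * hs (Suc k)"
    using HB_sample_path_position_bounds[OF path unb bdd hs_nonneg] unfolding q_def by blast
  have "card A \<ge> 1" using yy[of 0] \<open>finite A\<close> by (simp add: Suc_le_eq card_gt_0_iff) blast
  then have weight: "\<bar>hf (Suc i) * \<epsilon> m i\<bar> \<le> hf (Suc i)" for m i
    using admissible_pos[OF hf, of i] by (auto simp: \<epsilon>_def abs_mult mult_left_le)
  have "vanishing_window_sums hf (\<lambda>i. (hf (Suc i) * \<epsilon> m i) *\<^sub>R gi m (q i))" if "m \<in> A" for m
    using vanishing_window_sums_scaleR_slowly_varying[OF hf hs_nonneg ratio q_bdd q_step gi[OF that] _ weight]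
      noise[OF that] by (simp add: \<epsilon>_def)
  then have "vanishing_window_sums hf (\<lambda>i. \<Sum>m\<in>A. (hf (Suc i) * \<epsilon> m i) *\<^sub>R gi m (q i))"
    by (rule vanishing_window_sums_sum[OF \<open>finite A\<close>])
  then show "vanishing_window_sums hf (\<lambda>i. hf (Suc i) *\<^sub>R ((1 / hf (Suc i)) *\<^sub>R
      (snd (X (Suc i) (jbar E i)) - snd (X i (jbar E i))) - snd (HB_flow_map \<kappa> Tc g (X i (jbar E i)))))"
    unfolding fast_term .
qed

lemma HB_sample_path_flow_condition:
  fixes g :: "'a::euclidean_space \<Rightarrow> 'a" and gi :: "nat \<Rightarrow> 'a \<Rightarrow> 'a"
  assumes path: "HB_sample_path gi \<kappa> Tc hs hf yy E X" and unb: "\<not> bdd_above (fst ` E)"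
    and bdd: "bounded ((\<lambda>(k, j). X k j) ` E)"
    and steps: "two_ts_admissible hs hf" and "Tc > 0"
    and g: "continuous_on UNIV g" and gi: "\<And>m. m \<in> A \<Longrightarrow> continuous_on UNIV (gi m)"
    and "finite A" and g_avg: "\<And>q. g q = (1 / real (card A)) *\<^sub>R (\<Sum>m\<in>A. gi m q)"
    and yy: "\<And>i. yy (Suc i) \<in> A"
    and noise: "\<And>m. m \<in> A \<Longrightarrow> vanishing_window_sums hf
      (\<lambda>i. hf (Suc i) * ((if yy (Suc i) = m then 1 else 0) - 1 / real (card A)))"
  shows "\<exists>f. bounded (range f) \<and>
    acc_pts (\<lambda>k. (X k (jbar E k), f k)) \<subseteq> {(x, v). x \<in> HB_C Tc \<and> v \<in> HB_F1 \<kappa> Tc g x} \<and>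
    tts_interp_cond hs (\<lambda>k j. fst (X k j)) (jbar E) (\<lambda>k. fst (f k)) \<and>
    tts_interp_cond hf (\<lambda>k j. snd (X k j)) (jbar E) (\<lambda>k. snd (f k))"
proof (intro exI conjI)
  have E: "hybrid_seq_domain E" using path by (simp add: HB_sample_path_def)
  let ?S = "(\<lambda>(k, j). X k j) ` E"
  have cont: "continuous_on UNIV (HB_flow_map \<kappa> Tc g)"
    by (rule continuous_on_HB_flow_map[OF g \<open>Tc > 0\<close>])
  show "bounded (range (\<lambda>k. HB_flow_map \<kappa> Tc g (X k (jbar E k))))"
  proof (rule bounded_subset)
    show "bounded (HB_flow_map \<kappa> Tc g ` closure ?S)"
      using bdd continuous_on_subset[OF cont subset_UNIV]
      by (intro compact_imp_bounded compact_continuous_image) (auto simp: compact_closure)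
    show "range (\<lambda>k. HB_flow_map \<kappa> Tc g (X k (jbar E k))) \<subseteq> HB_flow_map \<kappa> Tc g ` closure ?S"
      using hybrid_seq_domain_jbar_mem(1)[OF E unb] closure_subset by fastforce
  qed
  show "acc_pts (\<lambda>k. (X k (jbar E k), HB_flow_map \<kappa> Tc g (X k (jbar E k))))
      \<subseteq> {(x, v). x \<in> HB_C Tc \<and> v \<in> HB_F1 \<kappa> Tc g x}"
    using acc_pts_graph_subset[OF HB_sample_path_flow_steps(1)[OF path unb] HB_C_closed cont]
    by (auto simp: HB_F1_eq)
  show "tts_interp_cond hs (\<lambda>k j. fst (X k j)) (jbar E) (\<lambda>k. fst (HB_flow_map \<kappa> Tc g (X k (jbar E k))))"
    using steps by (intro HB_sample_path_slow_interp_cond[OF path unb]) (simp add: two_ts_admissible_def)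
  show "tts_interp_cond hf (\<lambda>k j. snd (X k j)) (jbar E) (\<lambda>k. snd (HB_flow_map \<kappa> Tc g (X k (jbar E k))))"
    by (rule HB_sample_path_fast_interp_cond[OF path unb bdd steps gi \<open>finite A\<close> g_avg yy noise])
qed

lemma HB_sample_path_two_ts_asym_sim:
  fixes g :: "'a::euclidean_space \<Rightarrow> 'a" and gi :: "nat \<Rightarrow> 'a \<Rightarrow> 'a"
  assumes path: "HB_sample_path gi \<kappa> Tc hs hf yy E X" and "hs_complete E"
    and bdd: "bounded ((\<lambda>(k, j). X k j) ` E)"
    and steps: "two_ts_admissible hs hf" and "Tc > 0"
    and g: "continuous_on UNIV g" and gi: "\<And>m. m \<in> A \<Longrightarrow> continuous_on UNIV (gi m)"
    and "finite A" and g_avg: "\<And>q. g q = (1 / real (card A)) *\<^sub>R (\<Sum>m\<in>A. gi m q)"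
    and yy: "\<And>i. yy (Suc i) \<in> A"
    and noise: "\<And>m. m \<in> A \<Longrightarrow> vanishing_window_sums hf
      (\<lambda>i. hf (Suc i) * ((if yy (Suc i) = m then 1 else 0) - 1 / real (card A)))"
  shows "two_ts_asym_sim (HB_C Tc) (HB_F1 \<kappa> Tc g) (HB_D Tc) HB_G E X hs hf"
  unfolding two_ts_asym_sim_def
  using path \<open>hs_complete E\<close> bdd steps HB_sample_path_jump_condition[OF path]
    HB_sample_path_flow_condition[OF path _ bdd steps \<open>Tc > 0\<close> g gi \<open>finite A\<close> g_avg yy noise]
  by (simp add: HB_sample_path_def)

lemma gradient_of_scaled_sum:
  fixes \<Psi> :: "'a::real_inner \<Rightarrow> real"
  assumes "GDERIV \<Psi> q :> g" and "\<And>x. \<Psi> x = (\<Sum>i\<in>A. \<Psi>i i x) / c"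
    and "\<And>i. i \<in> A \<Longrightarrow> GDERIV (\<Psi>i i) q :> gi i"
  shows "g = (1 / c) *\<^sub>R (\<Sum>i\<in>A. gi i)"
proof -
  define G where "G = (1 / c) *\<^sub>R (\<Sum>i\<in>A. gi i)"
  have "((\<lambda>x. \<Sum>i\<in>A. \<Psi>i i x) has_derivative (\<lambda>h. \<Sum>i\<in>A. h \<bullet> gi i)) (at q)"
    using assms(3) unfolding gderiv_def by (rule has_derivative_sum)
  from has_derivative_mult_left[OF this, of "1 / c"]
  have "((\<lambda>x. (\<Sum>i\<in>A. \<Psi>i i x) * (1 / c)) has_derivative (\<lambda>h. h \<bullet> G)) (at q)"
    by (simp add: G_def inner_sum_right mult.commute)
  moreover have "(\<lambda>x. (\<Sum>i\<in>A. \<Psi>i i x) * (1 / c)) = \<Psi>" using assms(2) by (simp add: fun_eq_iff)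
  ultimately have "(\<Psi> has_derivative (\<lambda>h. h \<bullet> G)) (at q)" by simp
  then have "(\<lambda>h. h \<bullet> g) = (\<lambda>h. h \<bullet> G)"
    using assms(1) unfolding gderiv_def by (rule has_derivative_unique[rotated])
  then have "(g - G) \<bullet> (g - G) = 0" by (metis inner_commute inner_diff_right right_minus_eq)
  then show ?thesis by (simp add: G_def)
qed

lemma (in prob_space) expectation_centered_indicator_uniform:
  assumes Y: "Y \<in> measurable M (count_space UNIV)"
    and distr: "distr M (count_space UNIV) Y = measure_pmf (pmf_of_set A)" and "finite A" "m \<in> A"
  shows "expectation (\<lambda>\<omega>. (if Y \<omega> = m then 1 else 0) - 1 / real (card A)) = 0"
proof -
  define f where "f x = (if x = m then 1 else 0) - 1 / real (card A)" for x
  have "expectation (\<lambda>\<omega>. f (Y \<omega>)) = measure_pmf.expectation (pmf_of_set A) f"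
    by (subst integral_distr[OF Y, symmetric]) (simp_all add: distr)
  also have "\<dots> = (\<Sum>x\<in>A. f x) / real (card A)"
    using assms(3,4) by (intro integral_pmf_of_set) auto
  also have "(\<Sum>x\<in>A. f x) = 0"
    using assms(3,4) by (simp add: f_def sum_subtractf) blast
  finally show ?thesis by (simp add: f_def)
qed

lemma (in prob_space) AE_in_uniform_support:
  assumes Y: "Y \<in> measurable M (count_space UNIV)"
    and distr: "distr M (count_space UNIV) Y = measure_pmf (pmf_of_set A)" and "finite A" "A \<noteq> {}"
  shows "AE \<omega> in M. Y \<omega> \<in> A"
proof (rule AE_distrD[OF Y])
  show "AE x in distr M (count_space UNIV) Y. x \<in> A"
    unfolding distr AE_measure_pmf_iff using assms(3,4) by (simp add: set_pmf_of_set)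
qed

lemma (in prob_space) AE_vanishing_window_sums_uniform_selection:
  assumes h: "admissible h" and "p > 0" and "summable (\<lambda>k. h (Suc k) powr p)"
    and y: "\<And>k. k \<ge> 1 \<Longrightarrow> y k \<in> measurable M (count_space UNIV)"
    and indep: "indep_vars (\<lambda>_. count_space UNIV) y {1..}"
    and unif: "\<And>k. k \<ge> 1 \<Longrightarrow> distr M (count_space UNIV) (y k) = measure_pmf (pmf_of_set A)"
    and "finite A"
  shows "AE \<omega> in M. \<forall>m\<in>A. vanishing_window_sums h
    (\<lambda>i. h (Suc i) * ((if y (Suc i) \<omega> = m then 1 else 0) - 1 / real (card A)))"
proof (rule AE_finite_allI[OF \<open>finite A\<close>])
  fix m assume "m \<in> A"
  show "AE \<omega> in M. vanishing_window_sums h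
    (\<lambda>i. h (Suc i) * ((if y (Suc i) \<omega> = m then 1 else 0) - 1 / real (card A)))"
  proof (rule AE_vanishing_window_sums_noise[OF h \<open>p > 0\<close> \<open>summable _\<close>])
    show "indep_vars (\<lambda>_. borel) (\<lambda>k \<omega>. (if y k \<omega> = m then 1 else 0) - 1 / real (card A)) {1..}"
      by (rule indep_vars_compose2[OF indep]) simp
    show "expectation (\<lambda>\<omega>. (if y k \<omega> = m then 1 else 0) - 1 / real (card A)) = 0" if "k \<ge> 1" for k
      using \<open>finite A\<close> \<open>m \<in> A\<close> by (intro expectation_centered_indicator_uniform[OF y[OF that] unif[OF that]])
    show "(if y k \<omega> = m then 1 else 0) - 1 / real (card A) \<in> {- 1 / real (card A)..1 - 1 / real (card A)}"
      for k \<omega> by simp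
  qed simp
qed

theorem lemma3:
  fixes \<Psi> :: "'a::euclidean_space \<Rightarrow> real" and g :: "'a \<Rightarrow> 'a"
    and N :: nat and \<Psi>i :: "nat \<Rightarrow> 'a \<Rightarrow> real" and gi :: "nat \<Rightarrow> 'a \<Rightarrow> 'a"
    and \<kappa> Tc \<rho> :: real and hs hf :: "nat \<Rightarrow> real"
    and M :: "'w measure" and y :: "nat \<Rightarrow> 'w \<Rightarrow> nat"
    and E :: "'w \<Rightarrow> (nat \<times> nat) set" and X :: "'w \<Rightarrow> nat \<Rightarrow> nat \<Rightarrow> ('a \<times> 'a \<times> real) \<times> 'a"
    and \<Omega>h :: "'w set"
  assumes grad: "\<And>q. GDERIV \<Psi> q :> g q" and gcont: "continuous_on UNIV g"
    and sublevel: "\<And>c. compact {q. \<Psi> q \<le> c}"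
    and lip: "\<exists>L. L-lipschitz_on UNIV g"
    and crit: "{q. \<forall>x. \<Psi> q \<le> \<Psi> x} = {q. g q = 0}"
    and N: "N \<ge> 1"
    and avg: "\<And>q. \<Psi> q = (\<Sum>i=1..N. \<Psi>i i q) / real N"
    and gradi: "\<And>i q. i \<in> {1..N} \<Longrightarrow> GDERIV (\<Psi>i i) q :> gi i q"
    and gconti: "\<And>i. i \<in> {1..N} \<Longrightarrow> continuous_on UNIV (gi i)"
    and kT: "\<kappa> > 0" "Tc > 0"
    and steps: "two_ts_admissible hs hf"
    and rho: "\<rho> \<ge> 1" "summable (\<lambda>k. hf (Suc k) powr (1 + \<rho>))"
    and P: "prob_space M"
    and ymeas: "\<And>k. k \<ge> 1 \<Longrightarrow> y k \<in> measurable M (count_space UNIV)"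
    and yindep: "prob_space.indep_vars M (\<lambda>_. count_space UNIV) y {1..}"
    and yunif: "\<And>k. k \<ge> 1 \<Longrightarrow> distr M (count_space UNIV) (y k) = measure_pmf (pmf_of_set {1..N})"
    and sol: "S_solution M y gi \<kappa> Tc hs hf E X"
    and bdd: "AE \<omega> in M. \<omega> \<in> \<Omega>h \<longrightarrow>
                 bounded ((\<lambda>(k, j). X \<omega> k j) ` E \<omega>) \<and> hs_complete (E \<omega>)"
  shows "AE \<omega> in M. \<omega> \<in> \<Omega>h \<longrightarrow>
           two_ts_asym_sim (HB_C Tc) (HB_F1 \<kappa> Tc g) (HB_D Tc) HB_G (E \<omega>) (X \<omega>) hs hf"
proof -
  interpret prob_space M by (rule P)
  have g_avg: "g q = (1 / real (card {1..N})) *\<^sub>R (\<Sum>m\<in>{1..N}. gi m q)" for q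
    using gradient_of_scaled_sum[OF grad avg gradi] by simp
  have "admissible hf" "1 + \<rho> > 0" using steps rho(1) by (simp_all add: two_ts_admissible_def)
  from AE_vanishing_window_sums_uniform_selection[OF this rho(2) ymeas yindep yunif]
  have noise: "AE \<omega> in M. \<forall>m\<in>{1..N}. vanishing_window_sums hf
      (\<lambda>i. hf (Suc i) * ((if y (Suc i) \<omega> = m then 1 else 0) - 1 / real (card {1..N})))"
    by simp
  have "AE \<omega> in M. y (Suc i) \<omega> \<in> {1..N}" for i
    using AE_in_uniform_support[OF ymeas yunif] N by simp
  then have y_range: "AE \<omega> in M. \<forall>i. y (Suc i) \<omega> \<in> {1..N}" by (simp add: AE_all_countable)
  show ?thesis
    using AE_space noise y_range bdd
  proof eventually_elim
    case (elim \<omega>)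
    then show ?case
      using HB_sample_path_two_ts_asym_sim[OF S_solution_sample_path[OF sol elim(1)] _ _ steps kT(2)
          gcont gconti finite_atLeastAtMost g_avg]
      by blast
  qed
qed

end
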